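(* In the setting of the context, fix a round $t$ and suppose $\frac12-9L^2\eta_t^2K^2N\sum_{i=1}^Np_i^2\ge C>0$ and $\frac{L\eta_t^2K}{2}-\frac{\eta_t}{2}\le0$. Under (A1)–(A3), $$\mathbb{E}f(V_{t+1})\le\mathbb{E}f(Q_t)-C\eta_tK\,\mathbb{E}\|\nabla f(Q_t)\|^2+\frac32L^2\eta_t^3K^2N(\sigma_l^2+6K\sigma_g^2)\sum_{i=1}^Np_i^2+\frac{L\eta_t^2K^2N}{2}\sigma_l^2\sum_{i=1}^Np_i^2.$$
   Context: Fix integers $N,K\ge1$; matrices in $\mathbb{R}^{d\times k}$ with Frobenius norm $\|\cdot\|$. Client losses $f_i$ are differentiable, $p_i\ge0$ with $\sum_ip_i=1$, $f=\sum_ip_if_i$. Stochastic gradients $\tilde\nabla f_i(W)$ use fresh randomness per call. (A1) $f$, each $f_i$ and each per-sample loss have $L$-Lipschitz gradients. (A2) Conditionally on the past, $\mathbb{E}\tilde\nabla f_i(W)=\nabla f_i(W)$, $\mathbb{E}\|\tilde\nabla f_i(W)-\nabla f_i(W)\|^2\le\sigma_l^2$. (A3) $\mathbb{E}\|\nabla f(W)-\nabla f_i(W)\|^2\le\sigma_g^2$ for all $W,i$, $\sigma_g^2>0$. $Q_t$ is the (random) global model at round $t$ of the existing heterogeneous-LoRA scheme. Auxiliary full-rank iterate: $Q^i_{t,0}=Q_t$, $Q^i_{t,\tau+1}=Q^i_{t,\tau}-\eta_t\tilde\nabla f_i(Q^i_{t,\tau})$ for $\tau=0,\dots,K-1$,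 and $V_{t+1}=\sum_ip_i\big(Q_t-\eta_t\sum_{\tau=0}^{K-1}\tilde\nabla f_i(Q^i_{t,\tau})\big)$. *)

theory Defs
  imports "HOL-Probability.Probability"
begin

type_synonym ('d, 'k) mat = "real ^ 'k ^ 'd"
  \<comment> \<open>d x k real matrices; the norm of real^'k^'d is the Frobenius norm\<close>

text \<open>Auxiliary full-rank local iterate Q^i_{t,tau}, for a fixed realisation
  xi of the per-call noise: xi i tau is the randomness of the tau-th call of client i.\<close>
fun local_iter ::
  "(nat \<Rightarrow> 'm::real_vector \<Rightarrow> 'n \<Rightarrow> 'm) \<Rightarrow> real \<Rightarrow> (nat \<Rightarrow> nat \<Rightarrow> 'n) \<Rightarrow> 'm \<Rightarrow> nat \<Rightarrow> nat \<Rightarrow> 'm"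
where
  "local_iter G \<eta> xi W0 i 0 = W0"
| "local_iter G \<eta> xi W0 i (Suc \<tau>) =
     local_iter G \<eta> xi W0 i \<tau> - \<eta> *\<^sub>R G i (local_iter G \<eta> xi W0 i \<tau>) (xi i \<tau>)"

definition V_next ::
  "(nat \<Rightarrow> 'm::real_vector \<Rightarrow> 'n \<Rightarrow> 'm) \<Rightarrow> (nat \<Rightarrow> real) \<Rightarrow> nat \<Rightarrow> nat \<Rightarrow> real \<Rightarrow> (nat \<Rightarrow> nat \<Rightarrow> 'n) \<Rightarrow> 'm \<Rightarrow> 'm"
where
  "V_next G p N K \<eta> xi W0 =
     (\<Sum>i\<in>{1..N}. p i *\<^sub>R (W0 - \<eta> *\<^sub>R (\<Sum>\<tau><K. G i (local_iter G \<eta> xi W0 i \<tau>) (xi i \<tau>))))"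

end

theory Submission
  imports Defs
begin

text \<open>Write the averaged update as \<open>V = Q - \<eta> (K \<nabla>f(Q) + D + n)\<close>, where \<open>D\<close> collects the client drift
  \<open>\<nabla>f\<^sub>i(Q\<^sup>i\<^sub>\<tau>) - \<nabla>f\<^sub>i(Q)\<close> and \<open>n\<close> the stochastic gradient noise. The descent lemma for the
  \<open>L\<close>-smooth \<open>f\<close>, with \<open>L \<eta> K \<le> 1\<close>, bounds \<open>f(V)\<close> pointwise by \<open>f(Q) - \<eta>K/2 |\<nabla>f(Q)|\<^sup>2\<close> plus
  \<open>\<eta>/K |D|\<^sup>2\<close>, a multiple of \<open>\<nabla>f(Q) \<bullet> n\<close> and \<open>L \<eta>\<^sup>2 |n|\<^sup>2\<close>. Because every call uses fresh randomness,
  independent of \<open>Q\<close> and of the earlier calls, the noises are martingale differences: \<open>\<nabla>f(Q) \<bullet> n\<close>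
  has mean zero and the noises of distinct calls are orthogonal, so \<open>E |n|\<^sup>2 \<le> K \<Sigma> p\<^sub>i\<^sup>2 \<sigma>\<^sub>l\<^sup>2\<close>. The drift
  is controlled by \<open>E |Q\<^sup>i\<^sub>\<tau> - Q|\<^sup>2\<close>, which satisfies a discrete Gronwall recursion that closes
  because \<open>6 \<eta>\<^sup>2 L\<^sup>2 K\<^sup>2 \<le> 1/3\<close>.\<close>

lemma norm_sum_scaleR_power2_le:
  fixes v :: "'i \<Rightarrow> 'a::real_normed_vector"
  shows "(norm (\<Sum>j\<in>J. c j *\<^sub>R v j))\<^sup>2 \<le> (\<Sum>j\<in>J. (c j)\<^sup>2) * (\<Sum>j\<in>J. (norm (v j))\<^sup>2)"
proof -
  have "norm (\<Sum>j\<in>J. c j *\<^sub>R v j) \<le> (\<Sum>j\<in>J. \<bar>c j\<bar> * norm (v j))"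
    by (rule order_trans[OF norm_sum]) simp
  then have "(norm (\<Sum>j\<in>J. c j *\<^sub>R v j))\<^sup>2 \<le> (\<Sum>j\<in>J. \<bar>c j\<bar> * norm (v j))\<^sup>2"
    by (intro power_mono) auto
  also have "\<dots> \<le> (\<Sum>j\<in>J. \<bar>c j\<bar>\<^sup>2) * (\<Sum>j\<in>J. (norm (v j))\<^sup>2)"
    by (rule Cauchy_Schwarz_ineq_sum)
  finally show ?thesis by simp
qed

lemma norm_sum_power2_le_card:
  fixes v :: "'i \<Rightarrow> 'a::real_normed_vector"
  shows "(norm (\<Sum>j\<in>J. v j))\<^sup>2 \<le> real (card J) * (\<Sum>j\<in>J. (norm (v j))\<^sup>2)"
  using norm_sum_scaleR_power2_le[of "\<lambda>_. 1" v J] by simp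

lemma norm_add_power2_le:
  fixes x y :: "'a::real_normed_vector"
  shows "(norm (x + y))\<^sup>2 \<le> 2 * (norm x)\<^sup>2 + 2 * (norm y)\<^sup>2"
proof -
  have "(norm (x + y))\<^sup>2 \<le> (norm x + norm y)\<^sup>2"
    by (intro power_mono norm_triangle_ineq) simp
  also have "\<dots> \<le> 2 * (norm x)\<^sup>2 + 2 * (norm y)\<^sup>2"
    using zero_le_power2[of "norm x - norm y"] by (simp add: power2_eq_square algebra_simps)
  finally show ?thesis .
qed

lemma inner_le_half_power2_add:
  fixes x y :: "'a::real_inner"
  shows "x \<bullet> y \<le> (norm x)\<^sup>2 / 2 + (norm y)\<^sup>2 / 2"
  using zero_le_power2[of "norm (x - y)"]
  by (simp add: power2_norm_eq_inner inner_diff_left inner_diff_right inner_commute)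

lemma abs_inner_le_half_power2_add:
  fixes x y :: "'a::real_inner"
  shows "\<bar>x \<bullet> y\<bar> \<le> (norm x)\<^sup>2 / 2 + (norm y)\<^sup>2 / 2"
  using inner_le_half_power2_add[of x y] inner_le_half_power2_add[of "-x" y] by simp

lemma power2_add3_le: "(x + y + z)\<^sup>2 \<le> 3 * (x\<^sup>2 + y\<^sup>2 + (z::real)\<^sup>2)"
  using zero_le_power2[of "x - y"] zero_le_power2[of "y - z"] zero_le_power2[of "x - z"]
  by (simp add: power2_eq_square algebra_simps)

lemma sum_lessThan_real_le: "(\<Sum>\<tau><K. real \<tau>) \<le> (real K)\<^sup>2 / 2"
  by (induction K) (simp_all add: power2_eq_square field_simps)

lemma lipschitz_imp_borel_measurable:
  fixes g :: "'a::real_normed_vector \<Rightarrow> 'b::real_normed_vector"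
  assumes "\<And>x y. norm (g x - g y) \<le> L * norm (x - y)"
  shows "g \<in> borel_measurable borel"
proof -
  have "(max L 0)-lipschitz_on UNIV g"
  proof (rule lipschitz_onI)
    fix x y
    have "dist (g x) (g y) \<le> L * dist x y"
      using assms by (simp add: dist_norm)
    also have "\<dots> \<le> max L 0 * dist x y"
      by (intro mult_right_mono) auto
    finally show "dist (g x) (g y) \<le> max L 0 * dist x y" .
  qed auto
  then show ?thesis
    by (intro borel_measurable_continuous_onI lipschitz_on_continuous_on)
qed

lemma lipschitz_gradient_taylor_bound:
  fixes f :: "'a::real_inner \<Rightarrow> real"
  assumes deriv: "\<And>W. (f has_derivative (\<lambda>H. g W \<bullet> H)) (at W)"
    and lip: "\<And>W W'. norm (g W - g W') \<le> L * norm (W - W')"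
  shows "\<bar>f y - f x - g x \<bullet> (y - x)\<bar> \<le> L / 2 * (norm (y - x))\<^sup>2"
proof -
  define h where "h = y - x"
  have D: "DERIV (\<lambda>t. f (x + t *\<^sub>R h)) t :> g (x + t *\<^sub>R h) \<bullet> h" for t
  proof -
    have "((\<lambda>t. f (x + t *\<^sub>R h)) has_derivative (\<lambda>s. g (x + t *\<^sub>R h) \<bullet> (s *\<^sub>R h))) (at t)"
      by (rule has_derivative_compose[where g=f, OF _ deriv]) (auto intro!: derivative_eq_intros)
    moreover have "(\<lambda>s. g (x + t *\<^sub>R h) \<bullet> (s *\<^sub>R h)) = (*) (g (x + t *\<^sub>R h) \<bullet> h)"
      by (auto simp: fun_eq_iff)
    ultimately show ?thesis
      unfolding has_field_derivative_def by simp
  qed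
  have slope: "\<bar>g (x + t *\<^sub>R h) \<bullet> h - g x \<bullet> h\<bar> \<le> L * t * (norm h)\<^sup>2" if "0 \<le> t" for t
  proof -
    have "\<bar>g (x + t *\<^sub>R h) \<bullet> h - g x \<bullet> h\<bar> \<le> norm (g (x + t *\<^sub>R h) - g x) * norm h"
      unfolding inner_diff_left[symmetric] by (rule Cauchy_Schwarz_ineq2)
    also have "\<dots> \<le> (L * norm (t *\<^sub>R h)) * norm h"
      using lip[of "x + t *\<^sub>R h" x] by (intro mult_right_mono) auto
    also have "\<dots> = L * t * (norm h)\<^sup>2"
      using that by (simp add: power2_eq_square)
    finally show ?thesis .
  qed
  have signed: "s * (f y - f x - g x \<bullet> h) \<le> L / 2 * (norm h)\<^sup>2" if s: "\<bar>s\<bar> = 1" for s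
  proof -
    define \<phi> where "\<phi> t = s * (f (x + t *\<^sub>R h) - t * (g x \<bullet> h)) - L / 2 * t\<^sup>2 * (norm h)\<^sup>2" for t
    have "\<phi> 1 \<le> \<phi> 0"
    proof (rule DERIV_nonpos_imp_nonincreasing[of 0 1 \<phi>])
      fix t :: real
      assume t: "0 \<le> t" "t \<le> 1"
      have "DERIV \<phi> t :> s * (g (x + t *\<^sub>R h) \<bullet> h - g x \<bullet> h) - L * t * (norm h)\<^sup>2"
        unfolding \<phi>_def[abs_def] by (rule derivative_eq_intros D refl)+ (simp add: power2_eq_square)
      moreover have "s * (g (x + t *\<^sub>R h) \<bullet> h - g x \<bullet> h) \<le> L * t * (norm h)\<^sup>2"
        using slope[OF t(1)] abs_ge_self[of "s * (g (x + t *\<^sub>R h) \<bullet> h - g x \<bullet> h)"] s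
        by (simp add: abs_mult)
      ultimately show "\<exists>D. DERIV \<phi> t :> D \<and> D \<le> 0"
        by auto
    qed simp
    then show ?thesis
      by (simp add: \<phi>_def h_def algebra_simps)
  qed
  show ?thesis
    using signed[of 1] signed[of "-1"] unfolding h_def by (intro abs_leI) simp_all
qed

text \<open>A discrete Gronwall argument: the sum \<open>T\<close> of the \<open>D \<tau>\<close> occurs on both sides of the
  summed recursion, with coefficient at most \<open>1/3\<close> on the right.\<close>
lemma sum_le_of_recursive_bound:
  fixes D :: "nat \<Rightarrow> real"
  assumes D_nonneg: "\<And>\<tau>. \<tau> < K \<Longrightarrow> 0 \<le> D \<tau>"
    and rec: "\<And>\<tau>. \<tau> < K \<Longrightarrow>
      D \<tau> \<le> 2 * \<eta>\<^sup>2 * real \<tau> * \<sigma> + 2 * \<eta>\<^sup>2 * real \<tau> * (\<Sum>s<\<tau>. 3 * L\<^sup>2 * D s + B)"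
    and \<sigma>: "0 \<le> \<sigma>" and B: "0 \<le> B" and small: "6 * \<eta>\<^sup>2 * L\<^sup>2 * (real K)\<^sup>2 \<le> 1/3"
  shows "(\<Sum>\<tau><K. D \<tau>) \<le> 3/2 * \<eta>\<^sup>2 * (real K)\<^sup>2 * \<sigma> + 3 * \<eta>\<^sup>2 * (real K)^3 * B"
proof -
  define T where "T = (\<Sum>\<tau><K. D \<tau>)"
  have T_nonneg: "0 \<le> T"
    unfolding T_def using D_nonneg by (intro sum_nonneg) auto
  have step: "D \<tau> \<le> 2 * \<eta>\<^sup>2 * \<sigma> * real \<tau> + (6 * \<eta>\<^sup>2 * L\<^sup>2 * real K * T + 2 * \<eta>\<^sup>2 * (real K)\<^sup>2 * B)"
    if t: "\<tau> < K" for \<tau>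
  proof -
    have "(\<Sum>s<\<tau>. D s) \<le> T"
      unfolding T_def using t D_nonneg by (intro sum_mono2) auto
    then have "3 * L\<^sup>2 * (\<Sum>s<\<tau>. D s) + real \<tau> * B \<le> 3 * L\<^sup>2 * T + real K * B"
      using t B by (intro add_mono mult_left_mono mult_right_mono) auto
    then have "(\<Sum>s<\<tau>. 3 * L\<^sup>2 * D s + B) \<le> 3 * L\<^sup>2 * T + real K * B"
      by (simp add: sum.distrib sum_distrib_left)
    then have "2 * \<eta>\<^sup>2 * real \<tau> * (\<Sum>s<\<tau>. 3 * L\<^sup>2 * D s + B) \<le> 2 * \<eta>\<^sup>2 * real \<tau> * (3 * L\<^sup>2 * T + real K * B)"
      by (intro mult_left_mono) auto
    also have "\<dots> \<le> 2 * \<eta>\<^sup>2 * real K * (3 * L\<^sup>2 * T + real K * B)"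
      using t T_nonneg B by (intro mult_left_mono mult_right_mono) auto
    finally show ?thesis
      using rec[OF t] by (simp add: algebra_simps power2_eq_square)
  qed
  have "(\<Sum>\<tau><K. D \<tau>) \<le> (\<Sum>\<tau><K. 2 * \<eta>\<^sup>2 * \<sigma> * real \<tau> + (6 * \<eta>\<^sup>2 * L\<^sup>2 * real K * T + 2 * \<eta>\<^sup>2 * (real K)\<^sup>2 * B))"
    by (intro sum_mono step) simp
  then have "T \<le> (\<Sum>\<tau><K. 2 * \<eta>\<^sup>2 * \<sigma> * real \<tau> + (6 * \<eta>\<^sup>2 * L\<^sup>2 * real K * T + 2 * \<eta>\<^sup>2 * (real K)\<^sup>2 * B))"
    by (simp only: T_def[symmetric])
  also have "\<dots> = 2 * \<eta>\<^sup>2 * \<sigma> * (\<Sum>\<tau><K. real \<tau>) + real K * (6 * \<eta>\<^sup>2 * L\<^sup>2 * real K * T + 2 * \<eta>\<^sup>2 * (real K)\<^sup>2 * B)"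
    by (simp add: sum.distrib sum_distrib_left)
  also have "\<dots> \<le> 2 * \<eta>\<^sup>2 * \<sigma> * ((real K)\<^sup>2 / 2) + real K * (6 * \<eta>\<^sup>2 * L\<^sup>2 * real K * T + 2 * \<eta>\<^sup>2 * (real K)\<^sup>2 * B)"
    using sum_lessThan_real_le[of K] \<sigma> by (intro add_mono mult_left_mono) auto
  also have "\<dots> = \<eta>\<^sup>2 * (real K)\<^sup>2 * \<sigma> + (6 * \<eta>\<^sup>2 * L\<^sup>2 * (real K)\<^sup>2) * T + 2 * \<eta>\<^sup>2 * (real K)^3 * B"
    by (simp add: algebra_simps power2_eq_square power3_eq_cube)
  finally have "T \<le> \<eta>\<^sup>2 * (real K)\<^sup>2 * \<sigma> + (6 * \<eta>\<^sup>2 * L\<^sup>2 * (real K)\<^sup>2) * T + 2 * \<eta>\<^sup>2 * (real K)^3 * B" .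
  moreover have "(6 * \<eta>\<^sup>2 * L\<^sup>2 * (real K)\<^sup>2) * T \<le> 1/3 * T"
    using small T_nonneg by (intro mult_right_mono) auto
  ultimately show ?thesis
    unfolding T_def[symmetric] by linarith
qed

text \<open>Descent along \<open>-\<eta> (k a + d + n)\<close>, with \<open>a\<close> the gradient, \<open>d\<close> the drift error and \<open>n\<close> the
  noise: complete the square in \<open>k a + d\<close>.\<close>
lemma descent_step_inequality:
  fixes a d n :: "'a::real_inner"
  assumes eta: "0 < \<eta>" and k: "0 < k" and small: "L * \<eta> * k \<le> 1"
  shows "a \<bullet> (- \<eta> *\<^sub>R (k *\<^sub>R a + d + n)) + L / 2 * (norm (\<eta> *\<^sub>R (k *\<^sub>R a + d + n)))\<^sup>2
     \<le> - \<eta> * k / 2 * (norm a)\<^sup>2 + \<eta> / (2 * k) * (norm d)\<^sup>2 + (L * k * \<eta>\<^sup>2 - \<eta>) * (a \<bullet> n)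
        + L * \<eta>\<^sup>2 * (d \<bullet> n) + L * \<eta>\<^sup>2 / 2 * (norm n)\<^sup>2"
proof -
  define m where "m = k *\<^sub>R a + d"
  have expand: "a \<bullet> (- \<eta> *\<^sub>R (k *\<^sub>R a + d + n)) + L / 2 * (norm (\<eta> *\<^sub>R (k *\<^sub>R a + d + n)))\<^sup>2
      = - \<eta> * (a \<bullet> m) + L * \<eta>\<^sup>2 / 2 * (norm m)\<^sup>2 + (L * k * \<eta>\<^sup>2 - \<eta>) * (a \<bullet> n)
        + L * \<eta>\<^sup>2 * (d \<bullet> n) + L * \<eta>\<^sup>2 / 2 * (norm n)\<^sup>2"
    unfolding m_def power2_norm_eq_inner
    by (simp add: inner_add_left inner_add_right inner_commute power2_eq_square algebra_simps)
  have "L * \<eta>\<^sup>2 / 2 = (L * \<eta> * k) * (\<eta> / (2 * k))"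
    using k by (simp add: field_simps power2_eq_square)
  also have "\<dots> \<le> \<eta> / (2 * k)"
    using mult_right_mono[OF small, of "\<eta> / (2 * k)"] eta k by simp
  finally have "L * \<eta>\<^sup>2 / 2 * (norm m)\<^sup>2 \<le> \<eta> / (2 * k) * (norm m)\<^sup>2"
    by (intro mult_right_mono) auto
  moreover have "- \<eta> * (a \<bullet> m) + \<eta> / (2 * k) * (norm m)\<^sup>2
      = - \<eta> * k / 2 * (norm a)\<^sup>2 + \<eta> / (2 * k) * (norm d)\<^sup>2"
    unfolding m_def power2_norm_eq_inner using k
    by (simp add: inner_add_left inner_add_right inner_commute field_simps power2_eq_square)
  ultimately show ?thesis
    unfolding expand by linarith
qed

lemma cross_term_le:
  fixes d n :: "'a::real_inner"
  assumes L: "0 \<le> L" and small: "L * \<eta>\<^sup>2 \<le> \<eta> / k"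
  shows "L * \<eta>\<^sup>2 * (d \<bullet> n) + L * \<eta>\<^sup>2 / 2 * (norm n)\<^sup>2 + \<eta> / (2 * k) * (norm d)\<^sup>2
    \<le> \<eta> / k * (norm d)\<^sup>2 + L * \<eta>\<^sup>2 * (norm n)\<^sup>2"
proof -
  have "L * \<eta>\<^sup>2 * (d \<bullet> n) \<le> L * \<eta>\<^sup>2 * (norm d)\<^sup>2 / 2 + L * \<eta>\<^sup>2 * (norm n)\<^sup>2 / 2"
    using mult_left_mono[OF inner_le_half_power2_add[of d n], of "L * \<eta>\<^sup>2"] L
    by (simp add: algebra_simps)
  moreover have "L * \<eta>\<^sup>2 * (norm d)\<^sup>2 \<le> \<eta> / k * (norm d)\<^sup>2"
    using small by (rule mult_right_mono) simp
  moreover have "\<eta> / (2 * k) * (norm d)\<^sup>2 = \<eta> / k * (norm d)\<^sup>2 / 2"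
    and "L * \<eta>\<^sup>2 / 2 * (norm n)\<^sup>2 = L * \<eta>\<^sup>2 * (norm n)\<^sup>2 / 2"
    by simp_all
  ultimately show ?thesis
    by linarith
qed

definition square_integrable :: "'w measure \<Rightarrow> ('w \<Rightarrow> 'a::euclidean_space) \<Rightarrow> bool" where
  "square_integrable M X \<longleftrightarrow> X \<in> borel_measurable M \<and> integrable M (\<lambda>\<omega>. (norm (X \<omega>))\<^sup>2)"

context prob_space
begin

lemma square_integrable_bound:
  fixes X :: "'a \<Rightarrow> 'v::euclidean_space" and Y :: "'a \<Rightarrow> 'u::euclidean_space"
  assumes "X \<in> borel_measurable M" "square_integrable M Y"
    and "\<And>\<omega>. \<omega> \<in> space M \<Longrightarrow> norm (X \<omega>) \<le> norm (Y \<omega>)"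
  shows "square_integrable M X"
  unfolding square_integrable_def
proof
  show "integrable M (\<lambda>\<omega>. (norm (X \<omega>))\<^sup>2)"
  proof (rule Bochner_Integration.integrable_bound)
    show "integrable M (\<lambda>\<omega>. (norm (Y \<omega>))\<^sup>2)"
      using assms(2) unfolding square_integrable_def by auto
    show "(\<lambda>\<omega>. (norm (X \<omega>))\<^sup>2) \<in> borel_measurable M"
      using assms(1) by measurable
    show "AE \<omega> in M. norm ((norm (X \<omega>))\<^sup>2) \<le> norm ((norm (Y \<omega>))\<^sup>2)"
      using assms(3) by (intro AE_I2) (simp add: power_mono)
  qed
qed fact

lemma square_integrable_const: "square_integrable M (\<lambda>_. c)"
  unfolding square_integrable_def by auto

lemma square_integrable_add:
  assumes "square_integrable M X" "square_integrable M Y"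
  shows "square_integrable M (\<lambda>\<omega>. X \<omega> + Y \<omega>)"
  unfolding square_integrable_def
proof
  show meas: "(\<lambda>\<omega>. X \<omega> + Y \<omega>) \<in> borel_measurable M"
    using assms unfolding square_integrable_def by auto
  show "integrable M (\<lambda>\<omega>. (norm (X \<omega> + Y \<omega>))\<^sup>2)"
  proof (rule Bochner_Integration.integrable_bound)
    show "integrable M (\<lambda>\<omega>. 2 * (norm (X \<omega>))\<^sup>2 + 2 * (norm (Y \<omega>))\<^sup>2)"
      using assms unfolding square_integrable_def by auto
    show "(\<lambda>\<omega>. (norm (X \<omega> + Y \<omega>))\<^sup>2) \<in> borel_measurable M"
      using meas by measurable
    show "AE \<omega> in M. norm ((norm (X \<omega> + Y \<omega>))\<^sup>2) \<le> norm (2 * (norm (X \<omega>))\<^sup>2 + 2 * (norm (Y \<omega>))\<^sup>2)"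
      using norm_add_power2_le by (intro AE_I2) simp
  qed
qed

lemma square_integrable_scaleR:
  "square_integrable M X \<Longrightarrow> square_integrable M (\<lambda>\<omega>. c *\<^sub>R X \<omega>)"
  unfolding square_integrable_def by (auto simp: power_mult_distrib)

lemma square_integrable_diff:
  assumes "square_integrable M X" "square_integrable M Y"
  shows "square_integrable M (\<lambda>\<omega>. X \<omega> - Y \<omega>)"
  using square_integrable_add[OF assms(1) square_integrable_scaleR[OF assms(2), of "-1"]] by simp

lemma square_integrable_sum:
  "(\<And>j. j \<in> J \<Longrightarrow> square_integrable M (X j)) \<Longrightarrow> square_integrable M (\<lambda>\<omega>. \<Sum>j\<in>J. X j \<omega>)"
proof (induction J rule: infinite_finite_induct)
  case (insert x F)
  then show ?case
    using square_integrable_add[of "X x" "\<lambda>\<omega>. \<Sum>j\<in>F. X j \<omega>"] by simp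
qed (auto simp: square_integrable_const)

lemma square_integrable_norm:
  "square_integrable M X \<Longrightarrow> square_integrable M (\<lambda>\<omega>. norm (X \<omega>))"
  unfolding square_integrable_def by auto

lemma square_integrable_integrable_power2:
  "square_integrable M X \<Longrightarrow> integrable M (\<lambda>\<omega>. (norm (X \<omega>))\<^sup>2)"
  unfolding square_integrable_def by auto

lemma integrable_inner_square_integrable:
  fixes X Y :: "'a \<Rightarrow> 'v::euclidean_space"
  assumes "square_integrable M X" "square_integrable M Y"
  shows "integrable M (\<lambda>\<omega>. X \<omega> \<bullet> Y \<omega>)"
proof (rule Bochner_Integration.integrable_bound)
  show "integrable M (\<lambda>\<omega>. (norm (X \<omega>))\<^sup>2 / 2 + (norm (Y \<omega>))\<^sup>2 / 2)"
    using assms unfolding square_integrable_def by auto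
  show "(\<lambda>\<omega>. X \<omega> \<bullet> Y \<omega>) \<in> borel_measurable M"
    using assms unfolding square_integrable_def by (auto intro: borel_measurable_inner)
  show "AE \<omega> in M. norm (X \<omega> \<bullet> Y \<omega>) \<le> norm ((norm (X \<omega>))\<^sup>2 / 2 + (norm (Y \<omega>))\<^sup>2 / 2)"
    using abs_inner_le_half_power2_add by (intro AE_I2) simp
qed

end

lemma local_iter_cong:
  assumes "\<And>s. s < \<tau> \<Longrightarrow> xi i s = xi' i s"
  shows "local_iter G \<eta> xi W0 i \<tau> = local_iter G \<eta> xi' W0 i \<tau>"
  using assms by (induction \<tau>) auto

locale local_sgd_oracle = prob_space M for M :: "'w measure" +
  fixes S :: "'n measure"
    and N K :: nat and \<eta> \<sigma>l L :: real
    and G :: "nat \<Rightarrow> ('d::finite, 'k::finite) mat \<Rightarrow> 'n \<Rightarrow> ('d, 'k) mat"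
    and gfi :: "nat \<Rightarrow> ('d, 'k) mat \<Rightarrow> ('d, 'k) mat"
    and Q :: "'w \<Rightarrow> ('d, 'k) mat"
    and \<xi> :: "nat \<Rightarrow> nat \<Rightarrow> 'w \<Rightarrow> 'n"
  assumes N: "N \<ge> 1" and K: "K \<ge> 1"
    and Q_meas: "Q \<in> borel_measurable M"
    and xi_meas: "\<And>i \<tau>. \<xi> i \<tau> \<in> measurable M S"
    and G_meas: "\<And>i. i \<in> {1..N} \<Longrightarrow> (\<lambda>(W, x). G i W x) \<in> borel_measurable (borel \<Otimes>\<^sub>M S)"
    and xi_indep: "prob_space.indep_vars M (\<lambda>_. S) (\<lambda>(i, \<tau>). \<xi> i \<tau>) ({1..N} \<times> {..<K})"
    and Q_indep: "prob_space.indep_set M (sets (vimage_algebra (space M) Q borel))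
                    (sets (vimage_algebra (space M)
                       (\<lambda>\<omega>. restrict (\<lambda>(i, \<tau>). \<xi> i \<tau> \<omega>) ({1..N} \<times> {..<K}))
                       (\<Pi>\<^sub>M j\<in>{1..N} \<times> {..<K}. S)))"
    and A1_fi: "\<And>i W W'. i \<in> {1..N} \<Longrightarrow> norm (gfi i W - gfi i W') \<le> L * norm (W - W')"
    and A2_int: "\<And>i \<tau> W. i \<in> {1..N} \<Longrightarrow> \<tau> < K \<Longrightarrow> integrable M (\<lambda>\<omega>. G i W (\<xi> i \<tau> \<omega>))"
    and A2_unbiased: "\<And>i \<tau> W. i \<in> {1..N} \<Longrightarrow> \<tau> < K \<Longrightarrow>
                        (\<integral>\<omega>. G i W (\<xi> i \<tau> \<omega>) \<partial>M) = gfi i W"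
    and A2_var_int: "\<And>i \<tau> W. i \<in> {1..N} \<Longrightarrow> \<tau> < K \<Longrightarrow>
                        integrable M (\<lambda>\<omega>. (norm (G i W (\<xi> i \<tau> \<omega>) - gfi i W))\<^sup>2)"
    and A2_var: "\<And>i \<tau> W. i \<in> {1..N} \<Longrightarrow> \<tau> < K \<Longrightarrow>
                        (\<integral>\<omega>. (norm (G i W (\<xi> i \<tau> \<omega>) - gfi i W))\<^sup>2 \<partial>M) \<le> \<sigma>l\<^sup>2"
begin

abbreviation calls :: "(nat \<times> nat) set" where
  "calls \<equiv> {1..N} \<times> {..<K}"

abbreviation noise_space :: "(nat \<times> nat \<Rightarrow> 'n) measure" where
  "noise_space \<equiv> \<Pi>\<^sub>M j\<in>calls. S"

definition noise :: "'w \<Rightarrow> nat \<times> nat \<Rightarrow> 'n" where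
  "noise \<omega> = restrict (\<lambda>(i, \<tau>). \<xi> i \<tau> \<omega>) calls"

definition call_law :: "nat \<times> nat \<Rightarrow> 'n measure" where
  "call_law j = distr M S ((\<lambda>(i, \<tau>). \<xi> i \<tau>) j)"

lemma noise_apply: "(i, \<tau>) \<in> calls \<Longrightarrow> noise \<omega> (i, \<tau>) = \<xi> i \<tau> \<omega>"
  by (simp add: noise_def)

lemma measurable_noise: "noise \<in> measurable M noise_space"
  unfolding noise_def by (rule measurable_restrict) (auto simp: xi_meas split: prod.splits)

lemma measurable_model_noise: "(\<lambda>\<omega>. (Q \<omega>, noise \<omega>)) \<in> measurable M (borel \<Otimes>\<^sub>M noise_space)"
  using Q_meas measurable_noise by (rule measurable_Pair)

lemma prob_space_call_law: "prob_space (call_law j)"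
  unfolding call_law_def by (rule prob_space_distr) (auto simp: xi_meas split: prod.splits)

lemma product_sigma_finite_call_law: "product_sigma_finite call_law"
  unfolding product_sigma_finite_def using prob_space_call_law prob_space_imp_sigma_finite by blast

lemma sets_PiM_call_law: "sets (PiM J call_law) = sets (PiM J (\<lambda>_. S))"
  by (intro sets_PiM_cong) (auto simp: call_law_def)

lemma distr_noise: "distr M noise_space noise = (\<Pi>\<^sub>M j\<in>calls. call_law j)"
proof -
  have "calls \<noteq> {}"
    using N K by (auto simp: lessThan_empty_iff)
  then have "distr M noise_space (\<lambda>x. \<lambda>j\<in>calls. (\<lambda>(i, \<tau>). \<xi> i \<tau>) j x)
      = (\<Pi>\<^sub>M j\<in>calls. distr M S ((\<lambda>(i, \<tau>). \<xi> i \<tau>) j))"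
    using xi_indep indep_vars_iff_distr_eq_PiM[where I=calls and M'="\<lambda>_. S" and X="\<lambda>(i, \<tau>). \<xi> i \<tau>"]
    by (auto simp: xi_meas split: prod.splits)
  moreover have "(\<lambda>x. \<lambda>j\<in>calls. (\<lambda>(i, \<tau>). \<xi> i \<tau>) j x) = noise"
    by (auto simp: noise_def fun_eq_iff split: prod.splits)
  ultimately show ?thesis
    by (simp add: call_law_def)
qed

lemma distr_model_noise:
  "distr M borel Q \<Otimes>\<^sub>M (\<Pi>\<^sub>M j\<in>calls. call_law j) = distr M (borel \<Otimes>\<^sub>M noise_space) (\<lambda>\<omega>. (Q \<omega>, noise \<omega>))"
proof -
  interpret Q_law: prob_space "distr M borel Q"
    using Q_meas by (rule prob_space_distr)
  interpret noise_law: prob_space "distr M noise_space noise"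
    using measurable_noise by (rule prob_space_distr)
  have "distr M borel Q \<Otimes>\<^sub>M distr M noise_space noise = distr M (borel \<Otimes>\<^sub>M noise_space) (\<lambda>\<omega>. (Q \<omega>, noise \<omega>))"
  proof (rule pair_measure_eqI)
    show "sigma_finite_measure (distr M borel Q)" "sigma_finite_measure (distr M noise_space noise)"
      by unfold_locales
    fix A B
    assume "A \<in> sets (distr M borel Q)" and "B \<in> sets (distr M noise_space noise)"
    then have A: "A \<in> sets borel" and B: "B \<in> sets noise_space"
      by auto
    have "Q -` A \<inter> space M \<in> sets (vimage_algebra (space M) Q borel)"
      using A Q_meas by (auto simp: sets_vimage_algebra2 measurable_def)
    moreover have "noise -` B \<inter> space M
        \<in> sets (vimage_algebra (space M) (\<lambda>\<omega>. restrict (\<lambda>(i, \<tau>). \<xi> i \<tau> \<omega>) calls) noise_space)"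
      using B measurable_noise unfolding noise_def[abs_def]
      by (subst sets_vimage_algebra2) (auto simp: measurable_def)
    ultimately have "prob ((Q -` A \<inter> space M) \<inter> (noise -` B \<inter> space M))
        = prob (Q -` A \<inter> space M) * prob (noise -` B \<inter> space M)"
      by (rule indep_setD[OF Q_indep])
    moreover have "(\<lambda>\<omega>. (Q \<omega>, noise \<omega>)) -` (A \<times> B) \<inter> space M
        = (Q -` A \<inter> space M) \<inter> (noise -` B \<inter> space M)"
      by auto
    ultimately show "emeasure (distr M borel Q) A * emeasure (distr M noise_space noise) B
        = emeasure (distr M (borel \<Otimes>\<^sub>M noise_space) (\<lambda>\<omega>. (Q \<omega>, noise \<omega>))) (A \<times> B)"
      using A B Q_meas measurable_noise measurable_model_noise
      by (simp add: emeasure_distr emeasure_eq_measure ennreal_mult)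
  qed simp
  then show ?thesis
    unfolding distr_noise .
qed

text \<open>Local model and gradient noise as functions of the pair (initial model, noise vector), whose
  law is a product by \<open>distr_model_noise\<close>.\<close>
definition local_model_fn :: "nat \<Rightarrow> nat \<Rightarrow> ('d, 'k) mat \<times> (nat \<times> nat \<Rightarrow> 'n) \<Rightarrow> ('d, 'k) mat" where
  "local_model_fn i \<tau> = (\<lambda>(q, x). local_iter G \<eta> (\<lambda>a b. x (a, b)) q i \<tau>)"

definition local_noise_fn :: "nat \<Rightarrow> nat \<Rightarrow> ('d, 'k) mat \<times> (nat \<times> nat \<Rightarrow> 'n) \<Rightarrow> ('d, 'k) mat" where
  "local_noise_fn i \<tau> = (\<lambda>z. G i (local_model_fn i \<tau> z) (snd z (i, \<tau>)) - gfi i (local_model_fn i \<tau> z))"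

lemma local_model_fn_unroll:
  "local_model_fn i \<tau> (q, x) = q - \<eta> *\<^sub>R (\<Sum>s<\<tau>. G i (local_model_fn i s (q, x)) (x (i, s)))"
  by (induction \<tau>) (simp_all add: local_model_fn_def scaleR_add_right)

lemma local_model_fn_fun_upd:
  "j \<noteq> i \<or> \<tau> \<le> s \<Longrightarrow> local_model_fn i \<tau> (q, x((j, s) := y)) = local_model_fn i \<tau> (q, x)"
  unfolding local_model_fn_def by (auto intro!: local_iter_cong)

lemma borel_measurable_gfi: "i \<in> {1..N} \<Longrightarrow> gfi i \<in> borel_measurable borel"
  using A1_fi by (rule lipschitz_imp_borel_measurable)

lemma measurable_G_compose:
  "i \<in> {1..N} \<Longrightarrow> h \<in> borel_measurable N' \<Longrightarrow> g \<in> measurable N' S \<Longrightarrow>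
   (\<lambda>z. G i (h z) (g z)) \<in> borel_measurable N'"
  using measurable_compose[OF measurable_Pair G_meas] by simp

lemma measurable_call_component:
  "(i, \<tau>) \<in> calls \<Longrightarrow> (\<lambda>z::('d, 'k) mat \<times> (nat \<times> nat \<Rightarrow> 'n). snd z (i, \<tau>)) \<in> measurable (borel \<Otimes>\<^sub>M noise_space) S"
  by (intro measurable_compose[OF measurable_snd measurable_component_singleton])

lemma measurable_local_model_fn:
  "i \<in> {1..N} \<Longrightarrow> \<tau> \<le> K \<Longrightarrow> local_model_fn i \<tau> \<in> borel_measurable (borel \<Otimes>\<^sub>M noise_space)"
proof (induction \<tau>)
  case 0
  then show ?case
    by (simp add: local_model_fn_def case_prod_beta')
next
  case (Suc \<tau>)
  have "local_model_fn i (Suc \<tau>)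
      = (\<lambda>z. local_model_fn i \<tau> z - \<eta> *\<^sub>R G i (local_model_fn i \<tau> z) (snd z (i, \<tau>)))"
    by (auto simp: local_model_fn_def fun_eq_iff)
  moreover have "(i, \<tau>) \<in> calls"
    using Suc.prems by simp
  ultimately show ?case
    using Suc measurable_G_compose[OF Suc.prems(1) _ measurable_call_component] by simp
qed

lemma measurable_local_noise_fn:
  assumes "i \<in> {1..N}" "\<tau> < K"
  shows "local_noise_fn i \<tau> \<in> borel_measurable (borel \<Otimes>\<^sub>M noise_space)"
proof -
  have W: "local_model_fn i \<tau> \<in> borel_measurable (borel \<Otimes>\<^sub>M noise_space)"
    using assms by (intro measurable_local_model_fn) simp_all
  show ?thesis
    unfolding local_noise_fn_def
    using assms measurable_G_compose[OF assms(1) W measurable_call_component]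
      measurable_compose[OF W borel_measurable_gfi]
    by auto
qed

lemma call_law_noise_mean:
  assumes "i \<in> {1..N}" "\<tau> < K"
  shows "(\<integral>y. c \<bullet> (G i w y - gfi i w) \<partial>call_law (i, \<tau>)) = 0"
proof -
  interpret law: prob_space "call_law (i, \<tau>)"
    by (rule prob_space_call_law)
  have G_w: "G i w \<in> borel_measurable S"
    using measurable_G_compose[OF assms(1), of "\<lambda>_. w" S "\<lambda>y. y"] by simp
  have int: "integrable (call_law (i, \<tau>)) (G i w)"
    unfolding call_law_def using A2_int[OF assms, of w] G_w
    by (subst integrable_distr_eq) (auto simp: xi_meas)
  have "(\<integral>y. G i w y \<partial>call_law (i, \<tau>)) = gfi i w"
    unfolding call_law_def using A2_unbiased[OF assms, of w] G_w
    by (subst integral_distr) (auto simp: xi_meas)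
  then have "(\<integral>y. G i w y - gfi i w \<partial>call_law (i, \<tau>)) = 0"
    using int by (simp add: law.prob_space)
  moreover have "(\<integral>y. c \<bullet> (G i w y - gfi i w) \<partial>call_law (i, \<tau>)) = c \<bullet> (\<integral>y. G i w y - gfi i w \<partial>call_law (i, \<tau>))"
    using int by (intro integral_inner_right) auto
  ultimately show ?thesis
    by simp
qed

lemma call_law_noise_variance:
  assumes "i \<in> {1..N}" "\<tau> < K"
  shows "(\<integral>\<^sup>+y. ennreal ((norm (G i w y - gfi i w))\<^sup>2) \<partial>call_law (i, \<tau>)) \<le> ennreal (\<sigma>l\<^sup>2)"
proof -
  have "G i w \<in> borel_measurable S"
    using measurable_G_compose[OF assms(1), of "\<lambda>_. w" S "\<lambda>y. y"] by simp
  then have "(\<integral>\<^sup>+y. ennreal ((norm (G i w y - gfi i w))\<^sup>2) \<partial>call_law (i, \<tau>))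
      = (\<integral>\<^sup>+\<omega>. ennreal ((norm (G i w (\<xi> i \<tau> \<omega>) - gfi i w))\<^sup>2) \<partial>M)"
    unfolding call_law_def by (subst nn_integral_distr) (auto simp: xi_meas)
  also have "\<dots> = ennreal (\<integral>\<omega>. (norm (G i w (\<xi> i \<tau> \<omega>) - gfi i w))\<^sup>2 \<partial>M)"
    using A2_var_int[OF assms, of w] by (intro nn_integral_eq_integral) auto
  also have "\<dots> \<le> ennreal (\<sigma>l\<^sup>2)"
    using A2_var[OF assms, of w] by (rule ennreal_leI)
  finally show ?thesis .
qed

lemma nn_integral_model_noise:
  assumes H_meas: "H \<in> borel_measurable (borel \<Otimes>\<^sub>M noise_space)"
  shows "(\<integral>\<^sup>+\<omega>. H (Q \<omega>, noise \<omega>) \<partial>M)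
    = (\<integral>\<^sup>+q. (\<integral>\<^sup>+x. H (q, x) \<partial>(\<Pi>\<^sub>M j\<in>calls. call_law j)) \<partial>distr M borel Q)"
proof -
  interpret noise_law: prob_space "\<Pi>\<^sub>M j\<in>calls. call_law j"
    by (rule prob_space_PiM) (auto simp: prob_space_call_law)
  have "(\<integral>\<^sup>+\<omega>. H (Q \<omega>, noise \<omega>) \<partial>M) = integral\<^sup>N (distr M borel Q \<Otimes>\<^sub>M (\<Pi>\<^sub>M j\<in>calls. call_law j)) H"
    unfolding distr_model_noise using H_meas by (intro nn_integral_distr[symmetric, OF measurable_model_noise]) simp
  also have "\<dots> = (\<integral>\<^sup>+q. (\<integral>\<^sup>+x. H (q, x) \<partial>(\<Pi>\<^sub>M j\<in>calls. call_law j)) \<partial>distr M borel Q)"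
  proof (rule noise_law.nn_integral_fst[symmetric])
    show "H \<in> borel_measurable (distr M borel Q \<Otimes>\<^sub>M (\<Pi>\<^sub>M j\<in>calls. call_law j))"
      unfolding distr_model_noise using H_meas by simp
  qed
  finally show ?thesis .
qed

lemma integral_model_noise:
  fixes F :: "('d, 'k) mat \<times> (nat \<times> nat \<Rightarrow> 'n) \<Rightarrow> real"
  assumes F_meas: "F \<in> borel_measurable (borel \<Otimes>\<^sub>M noise_space)"
    and int: "integrable M (\<lambda>\<omega>. F (Q \<omega>, noise \<omega>))"
  shows "(\<integral>\<omega>. F (Q \<omega>, noise \<omega>) \<partial>M)
      = (\<integral>q. (\<integral>x. F (q, x) \<partial>(\<Pi>\<^sub>M j\<in>calls. call_law j)) \<partial>distr M borel Q)"
    and "AE q in distr M borel Q. integrable (\<Pi>\<^sub>M j\<in>calls. call_law j) (\<lambda>x. F (q, x))"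
proof -
  let ?\<mu> = "distr M borel Q" and ?\<nu> = "\<Pi>\<^sub>M j\<in>calls. call_law j"
  interpret Q_law: prob_space ?\<mu>
    using Q_meas by (rule prob_space_distr)
  interpret noise_law: prob_space ?\<nu>
    by (rule prob_space_PiM) (auto simp: prob_space_call_law)
  interpret pair: pair_sigma_finite ?\<mu> ?\<nu>
    by unfold_locales
  have int_pair: "integrable (?\<mu> \<Otimes>\<^sub>M ?\<nu>) F"
    unfolding distr_model_noise using int by (subst integrable_distr_eq[OF measurable_model_noise F_meas])
  have "(\<integral>\<omega>. F (Q \<omega>, noise \<omega>) \<partial>M) = integral\<^sup>L (?\<mu> \<Otimes>\<^sub>M ?\<nu>) F"
    unfolding distr_model_noise by (rule integral_distr[symmetric, OF measurable_model_noise F_meas])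
  also have "\<dots> = (\<integral>q. (\<integral>x. F (q, x) \<partial>?\<nu>) \<partial>?\<mu>)"
    by (rule pair.integral_fst'[OF int_pair, symmetric])
  finally show "(\<integral>\<omega>. F (Q \<omega>, noise \<omega>) \<partial>M) = (\<integral>q. (\<integral>x. F (q, x) \<partial>?\<nu>) \<partial>?\<mu>)" .
  show "AE q in ?\<mu>. integrable ?\<nu> (\<lambda>x. F (q, x))"
    by (rule pair.AE_integrable_fst'[OF int_pair])
qed

lemma nn_integral_PiM_call_law_insert:
  assumes k: "k \<in> calls" and g: "g \<in> borel_measurable (\<Pi>\<^sub>M j\<in>calls. S)"
  shows "(\<integral>\<^sup>+x. g x \<partial>(\<Pi>\<^sub>M j\<in>calls. call_law j))
    = (\<integral>\<^sup>+x. (\<integral>\<^sup>+y. g (x(k := y)) \<partial>call_law k) \<partial>(\<Pi>\<^sub>M j\<in>calls - {k}. call_law j))"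
proof -
  interpret product_sigma_finite call_law
    by (rule product_sigma_finite_call_law)
  have calls_eq: "insert k (calls - {k}) = calls"
    using k by auto
  have "g \<in> borel_measurable (\<Pi>\<^sub>M j\<in>insert k (calls - {k}). call_law j)"
    using g unfolding calls_eq by (simp add: measurable_cong_sets[OF sets_PiM_call_law refl])
  then show ?thesis
    using product_nn_integral_insert[of "calls - {k}" k g] calls_eq by simp
qed

lemma integral_PiM_call_law_insert:
  fixes g :: "(nat \<times> nat \<Rightarrow> 'n) \<Rightarrow> real"
  assumes k: "k \<in> calls" and g: "integrable (\<Pi>\<^sub>M j\<in>calls. call_law j) g"
  shows "(\<integral>x. g x \<partial>(\<Pi>\<^sub>M j\<in>calls. call_law j))
    = (\<integral>x. (\<integral>y. g (x(k := y)) \<partial>call_law k) \<partial>(\<Pi>\<^sub>M j\<in>calls - {k}. call_law j))"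
proof -
  interpret product_sigma_finite call_law
    by (rule product_sigma_finite_call_law)
  have calls_eq: "insert k (calls - {k}) = calls"
    using k by auto
  show ?thesis
    using product_integral_insert[of "calls - {k}" k g] g calls_eq by simp
qed

text \<open>Fresh randomness: if \<open>\<phi>\<close> does not look at the noise of call \<open>(i, \<tau>)\<close>, then integrating
  that noise first, with the model and all other noises frozen, kills the unbiased gradient noise.\<close>
lemma integral_inner_local_noise_fn_eq_0:
  assumes i: "i \<in> {1..N}" and t: "\<tau> < K"
    and \<phi>_meas: "\<phi> \<in> borel_measurable (borel \<Otimes>\<^sub>M noise_space)"
    and \<phi>_indep: "\<And>q x y. \<phi> (q, x((i, \<tau>) := y)) = \<phi> (q, x)"
    and int: "integrable M (\<lambda>\<omega>. \<phi> (Q \<omega>, noise \<omega>) \<bullet> local_noise_fn i \<tau> (Q \<omega>, noise \<omega>))"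
  shows "(\<integral>\<omega>. \<phi> (Q \<omega>, noise \<omega>) \<bullet> local_noise_fn i \<tau> (Q \<omega>, noise \<omega>) \<partial>M) = 0"
proof -
  define F where "F = (\<lambda>z. \<phi> z \<bullet> local_noise_fn i \<tau> z)"
  have F_meas: "F \<in> borel_measurable (borel \<Otimes>\<^sub>M noise_space)"
    unfolding F_def using \<phi>_meas measurable_local_noise_fn[OF i t] by auto
  have int_F: "integrable M (\<lambda>\<omega>. F (Q \<omega>, noise \<omega>))"
    using int by (simp add: F_def)
  have "AE q in distr M borel Q. (\<integral>x. F (q, x) \<partial>(\<Pi>\<^sub>M j\<in>calls. call_law j)) = 0"
    using integral_model_noise(2)[OF F_meas int_F]
  proof eventually_elim
    case (elim q)
    have "(\<integral>y. F (q, x((i, \<tau>) := y)) \<partial>call_law (i, \<tau>)) = 0" for x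
      unfolding F_def local_noise_fn_def
      using \<phi>_indep call_law_noise_mean[OF i t] local_model_fn_fun_upd by simp
    then show ?case
      using integral_PiM_call_law_insert[OF _ elim, of "(i, \<tau>)"] i t by simp
  qed
  then show ?thesis
    using integral_model_noise(1)[OF F_meas int_F] by (simp add: F_def integral_eq_zero_AE)
qed

lemma nn_integral_local_noise_fn_le:
  assumes i: "i \<in> {1..N}" and t: "\<tau> < K"
  shows "(\<integral>\<^sup>+\<omega>. ennreal ((norm (local_noise_fn i \<tau> (Q \<omega>, noise \<omega>)))\<^sup>2) \<partial>M) \<le> ennreal (\<sigma>l\<^sup>2)"
proof -
  define H where "H = (\<lambda>z. ennreal ((norm (local_noise_fn i \<tau> z))\<^sup>2))"
  have H_meas: "H \<in> borel_measurable (borel \<Otimes>\<^sub>M noise_space)"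
    unfolding H_def using measurable_local_noise_fn[OF i t] by measurable
  have "(\<integral>\<^sup>+x. H (q, x) \<partial>(\<Pi>\<^sub>M j\<in>calls. call_law j)) \<le> ennreal (\<sigma>l\<^sup>2)" for q
  proof -
    interpret rest_law: prob_space "\<Pi>\<^sub>M j\<in>calls - {(i, \<tau>)}. call_law j"
      by (rule prob_space_PiM) (auto simp: prob_space_call_law)
    have "(\<integral>\<^sup>+y. H (q, x((i, \<tau>) := y)) \<partial>call_law (i, \<tau>)) \<le> ennreal (\<sigma>l\<^sup>2)" for x
      unfolding H_def local_noise_fn_def
      using call_law_noise_variance[OF i t] local_model_fn_fun_upd by simp
    then have "(\<integral>\<^sup>+x. (\<integral>\<^sup>+y. H (q, x((i, \<tau>) := y)) \<partial>call_law (i, \<tau>)) \<partial>(\<Pi>\<^sub>M j\<in>calls - {(i, \<tau>)}. call_law j))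
        \<le> (\<integral>\<^sup>+x. ennreal (\<sigma>l\<^sup>2) \<partial>(\<Pi>\<^sub>M j\<in>calls - {(i, \<tau>)}. call_law j))"
      by (intro nn_integral_mono)
    also have "\<dots> = ennreal (\<sigma>l\<^sup>2)"
      using rest_law.emeasure_space_1 by simp
    finally show ?thesis
      using i t measurable_Pair2[OF H_meas, of q] by (subst nn_integral_PiM_call_law_insert) auto
  qed
  then have "(\<integral>\<^sup>+\<omega>. H (Q \<omega>, noise \<omega>) \<partial>M) \<le> (\<integral>\<^sup>+q. ennreal (\<sigma>l\<^sup>2) \<partial>distr M borel Q)"
    unfolding nn_integral_model_noise[OF H_meas] by (intro nn_integral_mono)
  also have "\<dots> = ennreal (\<sigma>l\<^sup>2)"
    using prob_space.emeasure_space_1[OF prob_space_distr[OF Q_meas]] by simp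
  finally show ?thesis
    by (simp add: H_def)
qed

definition local_model :: "nat \<Rightarrow> nat \<Rightarrow> 'w \<Rightarrow> ('d, 'k) mat" where
  "local_model i \<tau> \<omega> = local_model_fn i \<tau> (Q \<omega>, noise \<omega>)"

definition local_noise :: "nat \<Rightarrow> nat \<Rightarrow> 'w \<Rightarrow> ('d, 'k) mat" where
  "local_noise i \<tau> \<omega> = local_noise_fn i \<tau> (Q \<omega>, noise \<omega>)"

definition local_grad :: "nat \<Rightarrow> nat \<Rightarrow> 'w \<Rightarrow> ('d, 'k) mat" where
  "local_grad i \<tau> \<omega> = gfi i (local_model i \<tau> \<omega>)"

lemma measurable_local_model:
  "i \<in> {1..N} \<Longrightarrow> \<tau> \<le> K \<Longrightarrow> local_model i \<tau> \<in> borel_measurable M"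
  unfolding local_model_def using measurable_compose[OF measurable_model_noise measurable_local_model_fn] by simp

lemma measurable_local_noise:
  "i \<in> {1..N} \<Longrightarrow> \<tau> < K \<Longrightarrow> local_noise i \<tau> \<in> borel_measurable M"
  unfolding local_noise_def using measurable_compose[OF measurable_model_noise measurable_local_noise_fn] by simp

lemma measurable_local_grad:
  "i \<in> {1..N} \<Longrightarrow> \<tau> \<le> K \<Longrightarrow> local_grad i \<tau> \<in> borel_measurable M"
  unfolding local_grad_def using measurable_compose[OF measurable_local_model borel_measurable_gfi] by simp

lemma local_noise_variance:
  assumes "i \<in> {1..N}" "\<tau> < K"
  shows "square_integrable M (local_noise i \<tau>)"
    and "(\<integral>\<omega>. (norm (local_noise i \<tau> \<omega>))\<^sup>2 \<partial>M) \<le> \<sigma>l\<^sup>2"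
proof -
  have meas: "(\<lambda>\<omega>. (norm (local_noise i \<tau> \<omega>))\<^sup>2) \<in> borel_measurable M"
    using measurable_local_noise[OF assms] by measurable
  have nn: "(\<integral>\<^sup>+\<omega>. ennreal ((norm (local_noise i \<tau> \<omega>))\<^sup>2) \<partial>M) \<le> ennreal (\<sigma>l\<^sup>2)"
    unfolding local_noise_def by (rule nn_integral_local_noise_fn_le[OF assms])
  show "square_integrable M (local_noise i \<tau>)"
    unfolding square_integrable_def using measurable_local_noise[OF assms] nn meas
    by (auto intro!: integrableI_nonneg simp: top.not_eq_extremum intro: le_less_trans)
  show "(\<integral>\<omega>. (norm (local_noise i \<tau> \<omega>))\<^sup>2 \<partial>M) \<le> \<sigma>l\<^sup>2"
    using nn meas by (subst integral_eq_nn_integral) (auto simp: enn2real_leI)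
qed

lemma G_local_model:
  "i \<in> {1..N} \<Longrightarrow> \<tau> < K \<Longrightarrow> G i (local_model i \<tau> \<omega>) (\<xi> i \<tau> \<omega>) = local_grad i \<tau> \<omega> + local_noise i \<tau> \<omega>"
  by (simp add: local_noise_def local_grad_def local_noise_fn_def local_model_def noise_apply)

lemma local_model_unroll:
  assumes "i \<in> {1..N}" "\<tau> \<le> K"
  shows "local_model i \<tau> \<omega> - Q \<omega> = - \<eta> *\<^sub>R (\<Sum>s<\<tau>. local_grad i s \<omega> + local_noise i s \<omega>)"
proof -
  have "(\<Sum>s<\<tau>. G i (local_model_fn i s (Q \<omega>, noise \<omega>)) (noise \<omega> (i, s)))
      = (\<Sum>s<\<tau>. local_grad i s \<omega> + local_noise i s \<omega>)"
    using assms G_local_model[OF assms(1)] by (intro sum.cong) (auto simp: local_model_def noise_apply)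
  then show ?thesis
    unfolding local_model_def local_model_fn_unroll[of i \<tau>] by simp
qed

lemma local_iter_eq_local_model:
  assumes "i \<in> {1..N}" "\<tau> \<le> K"
  shows "local_iter G \<eta> (\<lambda>i \<tau>. \<xi> i \<tau> \<omega>) (Q \<omega>) i \<tau> = local_model i \<tau> \<omega>"
proof -
  have "local_iter G \<eta> (\<lambda>i \<tau>. \<xi> i \<tau> \<omega>) (Q \<omega>) i \<tau> = local_iter G \<eta> (\<lambda>a b. noise \<omega> (a, b)) (Q \<omega>) i \<tau>"
    using assms by (intro local_iter_cong) (simp add: noise_apply)
  then show ?thesis
    by (simp add: local_model_def local_model_fn_def)
qed

text \<open>Noises of distinct calls are orthogonal: the later call (in the same client) or either call
  (in different clients) has fresh randomness that the other one does not see.\<close>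
lemma integral_inner_local_noise_eq_0:
  assumes i: "i \<in> {1..N}" "\<tau> < K" and j: "j \<in> {1..N}" "\<sigma> < K"
    and later: "j \<noteq> i \<or> \<sigma> < \<tau>"
  shows "(\<integral>\<omega>. local_noise j \<sigma> \<omega> \<bullet> local_noise i \<tau> \<omega> \<partial>M) = 0"
  unfolding local_noise_def
proof (rule integral_inner_local_noise_fn_eq_0[OF i])
  show "local_noise_fn j \<sigma> \<in> borel_measurable (borel \<Otimes>\<^sub>M noise_space)"
    by (rule measurable_local_noise_fn[OF j])
  show "integrable M (\<lambda>\<omega>. local_noise_fn j \<sigma> (Q \<omega>, noise \<omega>) \<bullet> local_noise_fn i \<tau> (Q \<omega>, noise \<omega>))"
    using integrable_inner_square_integrable[OF local_noise_variance(1)[OF j] local_noise_variance(1)[OF i]]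
    by (simp add: local_noise_def)
  show "local_noise_fn j \<sigma> (q, x((i, \<tau>) := y)) = local_noise_fn j \<sigma> (q, x)" for q x y
    using later local_model_fn_fun_upd[of i j \<sigma> \<tau>] by (auto simp: local_noise_fn_def)
qed

definition call_noise :: "nat \<times> nat \<Rightarrow> 'w \<Rightarrow> ('d, 'k) mat" where
  "call_noise k = local_noise (fst k) (snd k)"

lemma square_integrable_call_noise: "k \<in> calls \<Longrightarrow> square_integrable M (call_noise k)"
  unfolding call_noise_def by (cases k) (auto intro: local_noise_variance)

lemma integral_inner_call_noise:
  assumes "k \<in> calls" "l \<in> calls"
  shows "(\<integral>\<omega>. call_noise l \<omega> \<bullet> call_noise k \<omega> \<partial>M) = (if k = l then (\<integral>\<omega>. (norm (call_noise k \<omega>))\<^sup>2 \<partial>M) else 0)"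
proof -
  obtain i \<tau> j \<sigma> where k: "k = (i, \<tau>)" and l: "l = (j, \<sigma>)"
    by (cases k, cases l) auto
  have i: "i \<in> {1..N}" "\<tau> < K" and j: "j \<in> {1..N}" "\<sigma> < K"
    using assms k l by auto
  consider "k = l" | "j \<noteq> i \<or> \<sigma> < \<tau>" | "i \<noteq> j \<or> \<tau> < \<sigma>"
    using k l by fastforce
  then show ?thesis
  proof cases
    case 1
    then show ?thesis
      by (simp add: power2_norm_eq_inner)
  next
    case 2
    then show ?thesis
      using integral_inner_local_noise_eq_0[OF i j] k l by (auto simp: call_noise_def)
  next
    case 3
    then show ?thesis
      using integral_inner_local_noise_eq_0[OF j i] k l by (auto simp: call_noise_def inner_commute)
  qed
qed

lemma integral_norm_sum_call_noise_le:
  assumes J: "J \<subseteq> calls"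
  shows "(\<integral>\<omega>. (norm (\<Sum>k\<in>J. c k *\<^sub>R call_noise k \<omega>))\<^sup>2 \<partial>M) \<le> (\<Sum>k\<in>J. (c k)\<^sup>2) * \<sigma>l\<^sup>2"
proof -
  have fin: "finite J"
    using J by (rule finite_subset) auto
  have int: "integrable M (\<lambda>\<omega>. call_noise l \<omega> \<bullet> call_noise k \<omega>)" if "k \<in> J" "l \<in> J" for k l
    using that J by (intro integrable_inner_square_integrable square_integrable_call_noise) auto
  have "(norm (\<Sum>k\<in>J. c k *\<^sub>R call_noise k \<omega>))\<^sup>2
      = (\<Sum>k\<in>J. \<Sum>l\<in>J. c k * c l * (call_noise l \<omega> \<bullet> call_noise k \<omega>))" for \<omega>
    unfolding power2_norm_eq_inner inner_sum_left inner_sum_right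
    by (simp add: algebra_simps sum_distrib_left)
  then have "(\<integral>\<omega>. (norm (\<Sum>k\<in>J. c k *\<^sub>R call_noise k \<omega>))\<^sup>2 \<partial>M)
      = (\<Sum>k\<in>J. \<Sum>l\<in>J. c k * c l * (\<integral>\<omega>. call_noise l \<omega> \<bullet> call_noise k \<omega> \<partial>M))"
    using int by (simp add: Bochner_Integration.integral_sum integrable_sum)
  also have "\<dots> = (\<Sum>k\<in>J. (c k)\<^sup>2 * (\<integral>\<omega>. (norm (call_noise k \<omega>))\<^sup>2 \<partial>M))"
    using J fin by (intro sum.cong refl) (simp add: subsetD integral_inner_call_noise power2_eq_square if_distrib sum.delta cong: if_cong)
  also have "\<dots> \<le> (\<Sum>k\<in>J. (c k)\<^sup>2 * \<sigma>l\<^sup>2)"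
  proof (intro sum_mono mult_left_mono)
    fix k
    assume "k \<in> J"
    then have "fst k \<in> {1..N}" "snd k < K"
      using J by auto
    then show "(\<integral>\<omega>. (norm (call_noise k \<omega>))\<^sup>2 \<partial>M) \<le> \<sigma>l\<^sup>2"
      unfolding call_noise_def by (rule local_noise_variance(2))
  qed simp
  finally show ?thesis
    by (simp add: sum_distrib_right)
qed


lemma local_noise_partial_sum:
  assumes "i \<in> {1..N}" "\<tau> \<le> K"
  shows "square_integrable M (\<lambda>\<omega>. \<Sum>s<\<tau>. local_noise i s \<omega>)"
    and "(\<integral>\<omega>. (norm (\<Sum>s<\<tau>. local_noise i s \<omega>))\<^sup>2 \<partial>M) \<le> real \<tau> * \<sigma>l\<^sup>2"
proof -
  have calls: "{i} \<times> {..<\<tau>} \<subseteq> calls"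
    using assms by auto
  have sum_eq: "(\<Sum>s<\<tau>. local_noise i s \<omega>) = (\<Sum>k\<in>{i} \<times> {..<\<tau>}. 1 *\<^sub>R call_noise k \<omega>)" for \<omega>
  proof -
    have "{i} \<times> {..<\<tau>} = Pair i ` {..<\<tau>}"
      by auto
    then show ?thesis
      by (simp add: sum.reindex inj_on_def call_noise_def)
  qed
  show "square_integrable M (\<lambda>\<omega>. \<Sum>s<\<tau>. local_noise i s \<omega>)"
    unfolding sum_eq using calls
    by (intro square_integrable_sum square_integrable_scaleR square_integrable_call_noise) auto
  show "(\<integral>\<omega>. (norm (\<Sum>s<\<tau>. local_noise i s \<omega>))\<^sup>2 \<partial>M) \<le> real \<tau> * \<sigma>l\<^sup>2"
    using integral_norm_sum_call_noise_le[OF calls, of "\<lambda>_. 1"] by (simp add: sum_eq)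
qed
end

locale local_sgd_round = local_sgd_oracle M S N K \<eta> \<sigma>l L G gfi Q \<xi>
  for M :: "'w measure" and S :: "'n measure"
    and N K :: nat and \<eta> \<sigma>l L :: real
    and G :: "nat \<Rightarrow> ('d::finite, 'k::finite) mat \<Rightarrow> 'n \<Rightarrow> ('d, 'k) mat"
    and gfi :: "nat \<Rightarrow> ('d, 'k) mat \<Rightarrow> ('d, 'k) mat"
    and Q :: "'w \<Rightarrow> ('d, 'k) mat"
    and \<xi> :: "nat \<Rightarrow> nat \<Rightarrow> 'w \<Rightarrow> 'n" +
  fixes \<sigma>g :: real
    and p :: "nat \<Rightarrow> real"
    and f :: "('d, 'k) mat \<Rightarrow> real" and gf :: "('d, 'k) mat \<Rightarrow> ('d, 'k) mat"
    and fi :: "nat \<Rightarrow> ('d, 'k) mat \<Rightarrow> real"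
  assumes p_sum: "(\<Sum>i\<in>{1..N}. p i) = 1"
    and f_def: "\<And>W. f W = (\<Sum>i\<in>{1..N}. p i * fi i W)"
    and f_grad: "\<And>W. (f has_derivative (\<lambda>H. gf W \<bullet> H)) (at W)"
    and fi_grad: "\<And>i W. i \<in> {1..N} \<Longrightarrow> (fi i has_derivative (\<lambda>H. gfi i W \<bullet> H)) (at W)"
    and A1_f: "\<And>W W'. norm (gf W - gf W') \<le> L * norm (W - W')"
    and A3: "\<And>i W. i \<in> {1..N} \<Longrightarrow> (norm (gf W - gfi i W))\<^sup>2 \<le> \<sigma>g\<^sup>2"
    and fQ_int: "integrable M (\<lambda>\<omega>. f (Q \<omega>))"
    and gQ_int: "integrable M (\<lambda>\<omega>. (norm (gf (Q \<omega>)))\<^sup>2)"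
    and eta_pos: "\<eta> > 0"
    and step_small: "9 * L\<^sup>2 * \<eta>\<^sup>2 * (real K)\<^sup>2 * real N * (\<Sum>i\<in>{1..N}. (p i)\<^sup>2) \<le> 1/2"
begin

definition p2sum :: real where
  "p2sum = (\<Sum>i\<in>{1..N}. (p i)\<^sup>2)"

definition grad_moment :: real where
  "grad_moment = (\<integral>\<omega>. (norm (gf (Q \<omega>)))\<^sup>2 \<partial>M)"

lemma p2sum_nonneg: "0 \<le> p2sum"
  unfolding p2sum_def by (intro sum_nonneg) auto

lemma grad_moment_nonneg: "0 \<le> grad_moment"
  unfolding grad_moment_def by simp

lemma one_le_N_mul_p2sum: "1 \<le> real N * p2sum"
  using sum_squared_le_sum_of_squares[of p "{1..N}"] p_sum by (simp add: p2sum_def mult.commute)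

lemma L_nonneg: "0 \<le> L"
proof -
  obtain b :: "('d, 'k) mat" where "b \<in> Basis"
    using nonempty_Basis by blast
  then have "0 < norm b"
    using nonzero_Basis by simp
  moreover have "0 \<le> L * norm b"
    using A1_f[of b 0] norm_ge_zero[of "gf b - gf 0"] by (simp del: norm_ge_zero)
  ultimately show ?thesis
    using zero_le_mult_iff[of L "norm b"] by linarith
qed

lemma L_eta_K_power2_le: "L\<^sup>2 * \<eta>\<^sup>2 * (real K)\<^sup>2 \<le> 1/18"
proof -
  define x where "x = L\<^sup>2 * \<eta>\<^sup>2 * (real K)\<^sup>2"
  have "x \<le> x * (real N * p2sum)"
    using mult_left_mono[OF one_le_N_mul_p2sum, of x] by (simp add: x_def)
  moreover have "9 * (x * (real N * p2sum)) \<le> 1/2"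
    using step_small by (simp add: x_def p2sum_def mult_ac)
  ultimately show ?thesis
    unfolding x_def[symmetric] by linarith
qed

lemma L_eta_K_le_1: "L * \<eta> * real K \<le> 1"
proof (rule power2_le_imp_le)
  show "(L * \<eta> * real K)\<^sup>2 \<le> 1\<^sup>2"
    using L_eta_K_power2_le by (simp add: power_mult_distrib)
qed simp

text \<open>The gradient \<open>gf\<close> is determined by \<open>f\<close>, so \<open>f_def\<close> forces it to be the weighted sum of the
  client gradients.\<close>
lemma gf_eq_sum: "gf W = (\<Sum>i\<in>{1..N}. p i *\<^sub>R gfi i W)"
proof -
  define s where "s = (\<Sum>i\<in>{1..N}. p i *\<^sub>R gfi i W)"
  have "((\<lambda>W. \<Sum>i\<in>{1..N}. p i * fi i W) has_derivative (\<lambda>H. \<Sum>i\<in>{1..N}. p i * (gfi i W \<bullet> H))) (at W)"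
    by (intro has_derivative_sum has_derivative_mult_right fi_grad) auto
  moreover have "(\<lambda>H. \<Sum>i\<in>{1..N}. p i * (gfi i W \<bullet> H)) = (\<lambda>H. s \<bullet> H)"
    by (auto simp: fun_eq_iff inner_sum_left s_def)
  moreover have "f = (\<lambda>W. \<Sum>i\<in>{1..N}. p i * fi i W)"
    by (auto simp: fun_eq_iff f_def)
  ultimately have "(\<lambda>H. gf W \<bullet> H) = (\<lambda>H. s \<bullet> H)"
    using has_derivative_unique[OF f_grad] by simp
  then have "gf W \<bullet> (gf W - s) = s \<bullet> (gf W - s)"
    by (rule fun_cong)
  then have "(gf W - s) \<bullet> (gf W - s) = 0"
    by (simp only: inner_diff_left)
  then show ?thesis
    by (simp add: s_def)
qed

lemma borel_measurable_gf: "gf \<in> borel_measurable borel"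
  using A1_f by (rule lipschitz_imp_borel_measurable)

lemma borel_measurable_f: "f \<in> borel_measurable borel"
proof (rule borel_measurable_continuous_onI)
  show "continuous_on UNIV f"
    using f_grad by (intro continuous_at_imp_continuous_on ballI has_derivative_continuous)
qed

lemma measurable_grad_model: "(\<lambda>\<omega>. gf (Q \<omega>)) \<in> borel_measurable M"
  using measurable_compose[OF Q_meas borel_measurable_gf] by simp

lemma square_integrable_grad_model: "square_integrable M (\<lambda>\<omega>. gf (Q \<omega>))"
  unfolding square_integrable_def using measurable_grad_model gQ_int by simp

lemma norm_local_grad_le:
  assumes "i \<in> {1..N}"
  shows "norm (local_grad i \<tau> \<omega>) \<le> L * norm (local_model i \<tau> \<omega> - Q \<omega>) + \<bar>\<sigma>g\<bar> + norm (gf (Q \<omega>))"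
proof -
  have "local_grad i \<tau> \<omega> = (gfi i (local_model i \<tau> \<omega>) - gfi i (Q \<omega>)) + (gfi i (Q \<omega>) - gf (Q \<omega>)) + gf (Q \<omega>)"
    by (simp add: local_grad_def)
  also have "norm \<dots>
      \<le> norm (gfi i (local_model i \<tau> \<omega>) - gfi i (Q \<omega>)) + norm (gf (Q \<omega>) - gfi i (Q \<omega>)) + norm (gf (Q \<omega>))"
    by (intro order_trans[OF norm_triangle_ineq] add_mono) (auto simp: norm_minus_commute)
  also have "\<dots> \<le> L * norm (local_model i \<tau> \<omega> - Q \<omega>) + \<bar>\<sigma>g\<bar> + norm (gf (Q \<omega>))"
    using A1_fi[OF assms, of "local_model i \<tau> \<omega>" "Q \<omega>"] A3[OF assms, of "Q \<omega>"]
    by (simp add: abs_le_square_iff[symmetric])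
  finally show ?thesis .
qed

lemma local_grad_power2_le:
  assumes "i \<in> {1..N}"
  shows "(norm (local_grad i \<tau> \<omega>))\<^sup>2
    \<le> 3 * L\<^sup>2 * (norm (local_model i \<tau> \<omega> - Q \<omega>))\<^sup>2 + 3 * \<sigma>g\<^sup>2 + 3 * (norm (gf (Q \<omega>)))\<^sup>2"
proof -
  have "(norm (local_grad i \<tau> \<omega>))\<^sup>2 \<le> (L * norm (local_model i \<tau> \<omega> - Q \<omega>) + \<bar>\<sigma>g\<bar> + norm (gf (Q \<omega>)))\<^sup>2"
    using norm_local_grad_le[OF assms] by (intro power_mono) auto
  also have "\<dots> \<le> 3 * ((L * norm (local_model i \<tau> \<omega> - Q \<omega>))\<^sup>2 + \<bar>\<sigma>g\<bar>\<^sup>2 + (norm (gf (Q \<omega>)))\<^sup>2)"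
    by (rule power2_add3_le)
  finally show ?thesis
    by (simp add: power_mult_distrib algebra_simps)
qed

lemma square_integrable_local_grad_of_drift:
  assumes i: "i \<in> {1..N}" and t: "\<tau> \<le> K"
    and drift: "square_integrable M (\<lambda>\<omega>. local_model i \<tau> \<omega> - Q \<omega>)"
  shows "square_integrable M (local_grad i \<tau>)"
proof (rule square_integrable_bound[OF measurable_local_grad[OF i t]])
  show "square_integrable M (\<lambda>\<omega>. L * norm (local_model i \<tau> \<omega> - Q \<omega>) + \<bar>\<sigma>g\<bar> + norm (gf (Q \<omega>)))"
    using square_integrable_add[OF square_integrable_add[OF square_integrable_scaleR[OF
          square_integrable_norm[OF drift], of L] square_integrable_const[of "\<bar>\<sigma>g\<bar>"]]
          square_integrable_norm[OF square_integrable_grad_model]]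
    by simp
  show "norm (local_grad i \<tau> \<omega>) \<le> norm (L * norm (local_model i \<tau> \<omega> - Q \<omega>) + \<bar>\<sigma>g\<bar> + norm (gf (Q \<omega>)))" for \<omega>
    using norm_local_grad_le[OF i, of \<tau> \<omega>] L_nonneg by simp
qed

lemma square_integrable_local_drift:
  "i \<in> {1..N} \<Longrightarrow> \<tau> \<le> K \<Longrightarrow> square_integrable M (\<lambda>\<omega>. local_model i \<tau> \<omega> - Q \<omega>)"
proof (induction \<tau>)
  case 0
  then show ?case
    using local_model_unroll[of i 0] square_integrable_const[of 0] by simp
next
  case (Suc \<tau>)
  then have i: "i \<in> {1..N}" and t: "\<tau> < K"
    by auto
  have drift: "square_integrable M (\<lambda>\<omega>. local_model i \<tau> \<omega> - Q \<omega>)"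
    using Suc by simp
  have "(\<lambda>\<omega>. local_model i (Suc \<tau>) \<omega> - Q \<omega>)
      = (\<lambda>\<omega>. (local_model i \<tau> \<omega> - Q \<omega>) - \<eta> *\<^sub>R (local_grad i \<tau> \<omega> + local_noise i \<tau> \<omega>))"
    using local_model_unroll[OF i Suc.prems(2)] local_model_unroll[OF i, of \<tau>] t
    by (simp add: fun_eq_iff scaleR_add_right)
  moreover have "square_integrable M
      (\<lambda>\<omega>. (local_model i \<tau> \<omega> - Q \<omega>) - \<eta> *\<^sub>R (local_grad i \<tau> \<omega> + local_noise i \<tau> \<omega>))"
    using t by (intro square_integrable_diff square_integrable_scaleR square_integrable_add drift
        square_integrable_local_grad_of_drift[OF i] local_noise_variance(1)[OF i]) simp_all
  ultimately show ?case
    by (simp only:)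
qed

lemma square_integrable_local_grad: "i \<in> {1..N} \<Longrightarrow> \<tau> \<le> K \<Longrightarrow> square_integrable M (local_grad i \<tau>)"
  using square_integrable_local_grad_of_drift square_integrable_local_drift by blast

lemma local_drift_power2_le:
  assumes i: "i \<in> {1..N}" and t: "\<tau> < K"
  shows "(norm (local_model i \<tau> \<omega> - Q \<omega>))\<^sup>2 \<le> 2 * \<eta>\<^sup>2 * (norm (\<Sum>s<\<tau>. local_noise i s \<omega>))\<^sup>2
    + 2 * \<eta>\<^sup>2 * real \<tau> * (\<Sum>s<\<tau>. 3 * L\<^sup>2 * (norm (local_model i s \<omega> - Q \<omega>))\<^sup>2 + (3 * \<sigma>g\<^sup>2 + 3 * (norm (gf (Q \<omega>)))\<^sup>2))"
proof -
  define X where "X = (\<Sum>s<\<tau>. local_noise i s \<omega>)"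
  define R where "R = (\<Sum>s<\<tau>. 3 * L\<^sup>2 * (norm (local_model i s \<omega> - Q \<omega>))\<^sup>2 + (3 * \<sigma>g\<^sup>2 + 3 * (norm (gf (Q \<omega>)))\<^sup>2))"
  have "local_model i \<tau> \<omega> - Q \<omega> = - \<eta> *\<^sub>R (X + (\<Sum>s<\<tau>. local_grad i s \<omega>))"
    using local_model_unroll[OF i, of \<tau> \<omega>] t by (simp add: X_def sum.distrib add.commute)
  then have "(norm (local_model i \<tau> \<omega> - Q \<omega>))\<^sup>2 = \<eta>\<^sup>2 * (norm (X + (\<Sum>s<\<tau>. local_grad i s \<omega>)))\<^sup>2"
    by (simp add: power_mult_distrib)
  also have "\<dots> \<le> \<eta>\<^sup>2 * (2 * (norm X)\<^sup>2 + 2 * (real \<tau> * R))"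
  proof (intro mult_left_mono)
    have "(norm (\<Sum>s<\<tau>. local_grad i s \<omega>))\<^sup>2 \<le> real \<tau> * (\<Sum>s<\<tau>. (norm (local_grad i s \<omega>))\<^sup>2)"
      using norm_sum_power2_le_card[of "\<lambda>s. local_grad i s \<omega>" "{..<\<tau>}"] by simp
    also have "\<dots> \<le> real \<tau> * R"
      unfolding R_def using local_grad_power2_le[OF i] by (intro mult_left_mono sum_mono) (auto simp: add.assoc)
    finally show "(norm (X + (\<Sum>s<\<tau>. local_grad i s \<omega>)))\<^sup>2 \<le> 2 * (norm X)\<^sup>2 + 2 * (real \<tau> * R)"
      using norm_add_power2_le[of X "\<Sum>s<\<tau>. local_grad i s \<omega>"] by linarith
  qed simp
  finally show ?thesis
    by (simp add: X_def R_def algebra_simps)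
qed

lemma local_drift_recursion:
  assumes i: "i \<in> {1..N}" and t: "\<tau> < K"
  shows "(\<integral>\<omega>. (norm (local_model i \<tau> \<omega> - Q \<omega>))\<^sup>2 \<partial>M) \<le> 2 * \<eta>\<^sup>2 * real \<tau> * \<sigma>l\<^sup>2
    + 2 * \<eta>\<^sup>2 * real \<tau> * (\<Sum>s<\<tau>. 3 * L\<^sup>2 * (\<integral>\<omega>. (norm (local_model i s \<omega> - Q \<omega>))\<^sup>2 \<partial>M) + (3 * \<sigma>g\<^sup>2 + 3 * grad_moment))"
proof -
  have int_noise: "integrable M (\<lambda>\<omega>. (norm (\<Sum>s<\<tau>. local_noise i s \<omega>))\<^sup>2)"
    using local_noise_partial_sum(1)[OF i] t by (intro square_integrable_integrable_power2) simp
  have E_noise: "(\<integral>\<omega>. (norm (\<Sum>s<\<tau>. local_noise i s \<omega>))\<^sup>2 \<partial>M) \<le> real \<tau> * \<sigma>l\<^sup>2"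
    using local_noise_partial_sum(2)[OF i] t by simp
  have int_drift: "integrable M (\<lambda>\<omega>. (norm (local_model i s \<omega> - Q \<omega>))\<^sup>2)" if "s \<le> K" for s
    using square_integrable_local_drift[OF i that] by (rule square_integrable_integrable_power2)
  have int_summand: "integrable M (\<lambda>\<omega>. 3 * L\<^sup>2 * (norm (local_model i s \<omega> - Q \<omega>))\<^sup>2 + (3 * \<sigma>g\<^sup>2 + 3 * (norm (gf (Q \<omega>)))\<^sup>2))"
    if "s < \<tau>" for s
    using that t by (intro Bochner_Integration.integrable_add integrable_mult_right int_drift gQ_int integrable_const) auto
  have E_summands: "(\<Sum>s<\<tau>. (\<integral>\<omega>. 3 * L\<^sup>2 * (norm (local_model i s \<omega> - Q \<omega>))\<^sup>2 + (3 * \<sigma>g\<^sup>2 + 3 * (norm (gf (Q \<omega>)))\<^sup>2) \<partial>M))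
      = (\<Sum>s<\<tau>. 3 * L\<^sup>2 * (\<integral>\<omega>. (norm (local_model i s \<omega> - Q \<omega>))\<^sup>2 \<partial>M) + (3 * \<sigma>g\<^sup>2 + 3 * grad_moment))"
    using int_drift t
    by (intro sum.cong) (simp_all add: gQ_int Bochner_Integration.integral_add grad_moment_def prob_space)
  have "(\<integral>\<omega>. (norm (local_model i \<tau> \<omega> - Q \<omega>))\<^sup>2 \<partial>M)
      \<le> (\<integral>\<omega>. 2 * \<eta>\<^sup>2 * (norm (\<Sum>s<\<tau>. local_noise i s \<omega>))\<^sup>2
          + 2 * \<eta>\<^sup>2 * real \<tau> * (\<Sum>s<\<tau>. 3 * L\<^sup>2 * (norm (local_model i s \<omega> - Q \<omega>))\<^sup>2 + (3 * \<sigma>g\<^sup>2 + 3 * (norm (gf (Q \<omega>)))\<^sup>2)) \<partial>M)"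
    using t int_summand
    by (intro integral_mono local_drift_power2_le[OF i t] int_drift Bochner_Integration.integrable_add
        integrable_mult_right int_noise Bochner_Integration.integrable_sum gQ_int integrable_const) auto
  also have "\<dots> = 2 * \<eta>\<^sup>2 * (\<integral>\<omega>. (norm (\<Sum>s<\<tau>. local_noise i s \<omega>))\<^sup>2 \<partial>M) + 2 * \<eta>\<^sup>2 * real \<tau> *
      (\<Sum>s<\<tau>. (\<integral>\<omega>. 3 * L\<^sup>2 * (norm (local_model i s \<omega> - Q \<omega>))\<^sup>2 + (3 * \<sigma>g\<^sup>2 + 3 * (norm (gf (Q \<omega>)))\<^sup>2) \<partial>M))"
  proof -
    have "integrable M (\<lambda>\<omega>. \<Sum>s<\<tau>. 3 * L\<^sup>2 * (norm (local_model i s \<omega> - Q \<omega>))\<^sup>2 + (3 * \<sigma>g\<^sup>2 + 3 * (norm (gf (Q \<omega>)))\<^sup>2))"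
      using int_summand by (intro Bochner_Integration.integrable_sum) auto
    then show ?thesis
      using int_noise int_summand
      by (simp add: Bochner_Integration.integral_add Bochner_Integration.integral_sum)
  qed
  also have "\<dots> \<le> 2 * \<eta>\<^sup>2 * (real \<tau> * \<sigma>l\<^sup>2)
      + 2 * \<eta>\<^sup>2 * real \<tau> * (\<Sum>s<\<tau>. 3 * L\<^sup>2 * (\<integral>\<omega>. (norm (local_model i s \<omega> - Q \<omega>))\<^sup>2 \<partial>M) + (3 * \<sigma>g\<^sup>2 + 3 * grad_moment))"
    unfolding E_summands using E_noise by (intro add_mono mult_left_mono) auto
  finally show ?thesis
    by (simp add: algebra_simps)
qed

lemma local_drift_sum_le:
  assumes i: "i \<in> {1..N}"
  shows "(\<Sum>\<tau><K. (\<integral>\<omega>. (norm (local_model i \<tau> \<omega> - Q \<omega>))\<^sup>2 \<partial>M))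
     \<le> 3/2 * \<eta>\<^sup>2 * (real K)\<^sup>2 * \<sigma>l\<^sup>2 + 3 * \<eta>\<^sup>2 * (real K)^3 * (3 * \<sigma>g\<^sup>2 + 3 * grad_moment)"
proof (rule sum_le_of_recursive_bound)
  show "(\<integral>\<omega>. (norm (local_model i \<tau> \<omega> - Q \<omega>))\<^sup>2 \<partial>M) \<le> 2 * \<eta>\<^sup>2 * real \<tau> * \<sigma>l\<^sup>2 + 2 * \<eta>\<^sup>2 * real \<tau> *
      (\<Sum>s<\<tau>. 3 * L\<^sup>2 * (\<integral>\<omega>. (norm (local_model i s \<omega> - Q \<omega>))\<^sup>2 \<partial>M) + (3 * \<sigma>g\<^sup>2 + 3 * grad_moment))"
    if "\<tau> < K" for \<tau>
    using i that by (rule local_drift_recursion)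
  show "0 \<le> 3 * \<sigma>g\<^sup>2 + 3 * grad_moment"
    using grad_moment_nonneg by simp
  show "6 * \<eta>\<^sup>2 * L\<^sup>2 * (real K)\<^sup>2 \<le> 1/3"
    using L_eta_K_power2_le by (simp add: algebra_simps)
qed simp_all

lemma L_eta_power2_le: "L * \<eta>\<^sup>2 \<le> \<eta> / real K"
  using mult_right_mono[OF L_eta_K_le_1, of "\<eta> / real K"] eta_pos K
  by (simp add: field_simps power2_eq_square)

definition update :: "'w \<Rightarrow> ('d, 'k) mat" where
  "update \<omega> = (\<Sum>i\<in>{1..N}. p i *\<^sub>R (\<Sum>\<tau><K. local_grad i \<tau> \<omega> + local_noise i \<tau> \<omega>))"

lemma V_next_eq: "V_next G p N K \<eta> (\<lambda>i \<tau>. \<xi> i \<tau> \<omega>) (Q \<omega>) = Q \<omega> - \<eta> *\<^sub>R update \<omega>"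
proof -
  have "V_next G p N K \<eta> (\<lambda>i \<tau>. \<xi> i \<tau> \<omega>) (Q \<omega>)
      = (\<Sum>i\<in>{1..N}. p i *\<^sub>R (Q \<omega> - \<eta> *\<^sub>R (\<Sum>\<tau><K. local_grad i \<tau> \<omega> + local_noise i \<tau> \<omega>)))"
    unfolding V_next_def
    by (intro sum.cong refl arg_cong2[where f="(*\<^sub>R)"] arg_cong2[where f="(-)"])
      (simp add: local_iter_eq_local_model G_local_model)
  also have "\<dots> = (\<Sum>i\<in>{1..N}. p i) *\<^sub>R Q \<omega> - \<eta> *\<^sub>R update \<omega>"
    by (simp add: update_def scaleR_diff_right sum_subtractf scaleR_sum_left scaleR_sum_right mult.commute)
  finally show ?thesis
    using p_sum by simp
qed

definition drift_error :: "'w \<Rightarrow> ('d, 'k) mat" where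
  "drift_error \<omega> = (\<Sum>k\<in>calls. p (fst k) *\<^sub>R (local_grad (fst k) (snd k) \<omega> - gfi (fst k) (Q \<omega>)))"

definition noise_sum :: "'w \<Rightarrow> ('d, 'k) mat" where
  "noise_sum \<omega> = (\<Sum>k\<in>calls. p (fst k) *\<^sub>R call_noise k \<omega>)"

lemma sum_calls: "(\<Sum>k\<in>calls. g k) = (\<Sum>i\<in>{1..N}. \<Sum>\<tau><K. g (i, \<tau>))"
  by (simp add: sum.cartesian_product)

lemma sum_calls_p_power2: "(\<Sum>k\<in>calls. (p (fst k))\<^sup>2) = real K * p2sum"
  unfolding sum_calls by (simp add: p2sum_def sum_distrib_left)

lemma update_decomposition: "update \<omega> = real K *\<^sub>R gf (Q \<omega>) + drift_error \<omega> + noise_sum \<omega>"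
proof -
  have "update \<omega> = (\<Sum>k\<in>calls. p (fst k) *\<^sub>R (local_grad (fst k) (snd k) \<omega> + call_noise k \<omega>))"
    unfolding update_def sum_calls by (simp add: scaleR_sum_right call_noise_def)
  also have "\<dots> = (\<Sum>k\<in>calls. p (fst k) *\<^sub>R gfi (fst k) (Q \<omega>)) + drift_error \<omega> + noise_sum \<omega>"
    by (simp add: drift_error_def noise_sum_def scaleR_add_right scaleR_diff_right sum.distrib
        sum_subtractf algebra_simps)
  also have "(\<Sum>k\<in>calls. p (fst k) *\<^sub>R gfi (fst k) (Q \<omega>)) = real K *\<^sub>R gf (Q \<omega>)"
    unfolding sum_calls gf_eq_sum
    by (simp del: sum_constant add: scaleR_sum_right sum_constant_scaleR mult.commute)
  finally show ?thesis .
qed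

lemma drift_error_single_call: "N * K = 1 \<Longrightarrow> drift_error \<omega> = 0"
proof -
  assume "N * K = 1"
  then have "calls = {(1, 0)}"
    by auto
  moreover have "local_model 1 0 \<omega> = Q \<omega>"
    using local_model_unroll[of 1 0 \<omega>] N by simp
  ultimately show ?thesis
    by (simp add: drift_error_def local_grad_def)
qed

lemma square_integrable_drift_error: "square_integrable M drift_error"
proof -
  have "square_integrable M (\<lambda>\<omega>. gfi i (Q \<omega>))" if "i \<in> {1..N}" for i
  proof -
    have "local_grad i 0 = (\<lambda>\<omega>. gfi i (Q \<omega>))"
      using local_model_unroll[OF that, of 0] by (auto simp: local_grad_def fun_eq_iff)
    then show ?thesis
      using square_integrable_local_grad[OF that, of 0] by simp
  qed
  then have "square_integrable M (\<lambda>\<omega>. \<Sum>k\<in>calls. p (fst k) *\<^sub>R (local_grad (fst k) (snd k) \<omega> - gfi (fst k) (Q \<omega>)))"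
    by (intro square_integrable_sum square_integrable_scaleR square_integrable_diff square_integrable_local_grad) auto
  then show ?thesis
    by (simp add: drift_error_def[abs_def])
qed

lemma square_integrable_noise_sum: "square_integrable M noise_sum"
proof -
  have "square_integrable M (\<lambda>\<omega>. \<Sum>k\<in>calls. p (fst k) *\<^sub>R call_noise k \<omega>)"
    by (intro square_integrable_sum square_integrable_scaleR square_integrable_call_noise)
  then show ?thesis
    by (simp add: noise_sum_def[abs_def])
qed

lemma square_integrable_update: "square_integrable M update"
proof -
  have "square_integrable M (\<lambda>\<omega>. real K *\<^sub>R gf (Q \<omega>) + drift_error \<omega> + noise_sum \<omega>)"
    by (intro square_integrable_add square_integrable_scaleR square_integrable_grad_model
        square_integrable_drift_error square_integrable_noise_sum)
  then show ?thesis
    by (simp add: update_decomposition[abs_def])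
qed

lemma norm_drift_error_power2_le:
  "(norm (drift_error \<omega>))\<^sup>2
    \<le> real K * p2sum * L\<^sup>2 * (\<Sum>k\<in>calls. (norm (local_model (fst k) (snd k) \<omega> - Q \<omega>))\<^sup>2)"
proof -
  have "(norm (drift_error \<omega>))\<^sup>2 \<le> (\<Sum>k\<in>calls. (p (fst k))\<^sup>2)
      * (\<Sum>k\<in>calls. (norm (local_grad (fst k) (snd k) \<omega> - gfi (fst k) (Q \<omega>)))\<^sup>2)"
    unfolding drift_error_def by (rule norm_sum_scaleR_power2_le)
  also have "\<dots> \<le> (\<Sum>k\<in>calls. (p (fst k))\<^sup>2)
      * (\<Sum>k\<in>calls. L\<^sup>2 * (norm (local_model (fst k) (snd k) \<omega> - Q \<omega>))\<^sup>2)"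
  proof (intro mult_left_mono sum_mono)
    fix k
    assume "k \<in> calls"
    then have "norm (local_grad (fst k) (snd k) \<omega> - gfi (fst k) (Q \<omega>))
        \<le> L * norm (local_model (fst k) (snd k) \<omega> - Q \<omega>)"
      unfolding local_grad_def by (intro A1_fi) auto
    from power_mono[OF this norm_ge_zero, of 2]
    show "(norm (local_grad (fst k) (snd k) \<omega> - gfi (fst k) (Q \<omega>)))\<^sup>2
        \<le> L\<^sup>2 * (norm (local_model (fst k) (snd k) \<omega> - Q \<omega>))\<^sup>2"
      by (simp add: power_mult_distrib)
  qed (simp add: sum_nonneg)
  also have "\<dots> = real K * p2sum * L\<^sup>2 * (\<Sum>k\<in>calls. (norm (local_model (fst k) (snd k) \<omega> - Q \<omega>))\<^sup>2)"
    unfolding sum_calls_p_power2 by (simp add: sum_distrib_left mult_ac)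
  finally show ?thesis .
qed

lemma integral_drift_error_le:
  "(\<integral>\<omega>. (norm (drift_error \<omega>))\<^sup>2 \<partial>M) \<le> real K * p2sum * L\<^sup>2 * real N *
     (3/2 * \<eta>\<^sup>2 * (real K)\<^sup>2 * \<sigma>l\<^sup>2 + 3 * \<eta>\<^sup>2 * (real K)^3 * (3 * \<sigma>g\<^sup>2 + 3 * grad_moment))"
proof -
  have int: "integrable M (\<lambda>\<omega>. (norm (local_model (fst k) (snd k) \<omega> - Q \<omega>))\<^sup>2)" if "k \<in> calls" for k
    using that by (intro square_integrable_integrable_power2 square_integrable_local_drift) auto
  have "(\<integral>\<omega>. (norm (drift_error \<omega>))\<^sup>2 \<partial>M)
      \<le> (\<integral>\<omega>. real K * p2sum * L\<^sup>2 * (\<Sum>k\<in>calls. (norm (local_model (fst k) (snd k) \<omega> - Q \<omega>))\<^sup>2) \<partial>M)"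
    using int by (intro integral_mono norm_drift_error_power2_le integrable_mult_right
        square_integrable_integrable_power2[OF square_integrable_drift_error] Bochner_Integration.integrable_sum) auto
  also have "\<dots> = real K * p2sum * L\<^sup>2 * (\<Sum>k\<in>calls. (\<integral>\<omega>. (norm (local_model (fst k) (snd k) \<omega> - Q \<omega>))\<^sup>2 \<partial>M))"
    using int by (simp add: Bochner_Integration.integral_sum)
  also have "\<dots> = real K * p2sum * L\<^sup>2 * (\<Sum>i\<in>{1..N}. \<Sum>\<tau><K. (\<integral>\<omega>. (norm (local_model i \<tau> \<omega> - Q \<omega>))\<^sup>2 \<partial>M))"
    by (simp only: sum_calls fst_conv snd_conv)
  also have "\<dots> \<le> real K * p2sum * L\<^sup>2 *
      (\<Sum>i\<in>{1..N}. 3/2 * \<eta>\<^sup>2 * (real K)\<^sup>2 * \<sigma>l\<^sup>2 + 3 * \<eta>\<^sup>2 * (real K)^3 * (3 * \<sigma>g\<^sup>2 + 3 * grad_moment))"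
    using p2sum_nonneg by (intro mult_left_mono sum_mono local_drift_sum_le) auto
  finally show ?thesis
    by (simp add: mult.assoc)
qed

lemma integral_noise_sum_le: "(\<integral>\<omega>. (norm (noise_sum \<omega>))\<^sup>2 \<partial>M) \<le> real K * p2sum * \<sigma>l\<^sup>2"
  using integral_norm_sum_call_noise_le[of calls "\<lambda>k. p (fst k)"] sum_calls_p_power2
  by (simp add: noise_sum_def)

lemma integral_inner_grad_noise_sum_eq_0: "(\<integral>\<omega>. gf (Q \<omega>) \<bullet> noise_sum \<omega> \<partial>M) = 0"
proof -
  have zero: "(\<integral>\<omega>. gf (Q \<omega>) \<bullet> call_noise k \<omega> \<partial>M) = 0" if k: "k \<in> calls" for k
  proof -
    have "(\<integral>\<omega>. (\<lambda>z. gf (fst z)) (Q \<omega>, noise \<omega>) \<bullet> local_noise_fn (fst k) (snd k) (Q \<omega>, noise \<omega>) \<partial>M) = 0"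
    proof (rule integral_inner_local_noise_fn_eq_0)
      show "(\<lambda>z. gf (fst z)) \<in> borel_measurable (borel \<Otimes>\<^sub>M noise_space)"
        using measurable_compose[OF measurable_fst borel_measurable_gf] by simp
      show "integrable M (\<lambda>\<omega>. (\<lambda>z. gf (fst z)) (Q \<omega>, noise \<omega>) \<bullet> local_noise_fn (fst k) (snd k) (Q \<omega>, noise \<omega>))"
        using integrable_inner_square_integrable[OF square_integrable_grad_model square_integrable_call_noise[OF k]]
        by (simp add: call_noise_def local_noise_def)
    qed (use k in auto)
    then show ?thesis
      by (simp add: call_noise_def local_noise_def)
  qed
  have "(\<integral>\<omega>. gf (Q \<omega>) \<bullet> noise_sum \<omega> \<partial>M) = (\<integral>\<omega>. (\<Sum>k\<in>calls. p (fst k) * (gf (Q \<omega>) \<bullet> call_noise k \<omega>)) \<partial>M)"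
    by (simp add: noise_sum_def inner_sum_right)
  also have "\<dots> = (\<Sum>k\<in>calls. p (fst k) * (\<integral>\<omega>. gf (Q \<omega>) \<bullet> call_noise k \<omega> \<partial>M))"
    by (simp add: Bochner_Integration.integral_sum integrable_mult_right integrable_inner_square_integrable
        square_integrable_grad_model square_integrable_call_noise)
  also have "\<dots> = 0"
    by (simp add: zero)
  finally show ?thesis .
qed

text \<open>The drift-noise cross term costs a factor \<open>2\<close> on the noise; it is absent when there is a
  single client doing a single local step, since then the drift error vanishes.\<close>
definition noise_coeff :: real where
  "noise_coeff = (if N * K = 1 then 1/2 else 1)"

lemma noise_coeff_mul_K_le: "noise_coeff * real K \<le> (real K)\<^sup>2 * real N / 2"
proof (cases "N * K = 1")
  case True
  then show ?thesis
    unfolding noise_coeff_def by simp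
next
  case False
  have "0 < N * K"
    using N K by simp
  with False have "2 \<le> real N * real K"
    by (metis Suc_1 Suc_leI less_one nat_neq_iff of_nat_le_iff of_nat_mult of_nat_numeral)
  then have "2 * real K \<le> real N * real K * real K"
    using K by (intro mult_right_mono) auto
  then show ?thesis
    using False by (simp add: noise_coeff_def power2_eq_square algebra_simps)
qed

lemma f_update_le:
  "f (Q \<omega> - \<eta> *\<^sub>R update \<omega>) \<le> f (Q \<omega>) - \<eta> * real K / 2 * (norm (gf (Q \<omega>)))\<^sup>2
     + \<eta> / real K * (norm (drift_error \<omega>))\<^sup>2 + (L * real K * \<eta>\<^sup>2 - \<eta>) * (gf (Q \<omega>) \<bullet> noise_sum \<omega>)
     + L * \<eta>\<^sup>2 * noise_coeff * (norm (noise_sum \<omega>))\<^sup>2"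
proof -
  define a where "a = gf (Q \<omega>)"
  define d where "d = drift_error \<omega>"
  define n where "n = noise_sum \<omega>"
  have K_pos: "0 < real K"
    using K by simp
  have "f (Q \<omega> - \<eta> *\<^sub>R update \<omega>)
      \<le> f (Q \<omega>) + a \<bullet> (Q \<omega> - \<eta> *\<^sub>R update \<omega> - Q \<omega>) + L / 2 * (norm (Q \<omega> - \<eta> *\<^sub>R update \<omega> - Q \<omega>))\<^sup>2"
    using abs_le_D1[OF lipschitz_gradient_taylor_bound[OF f_grad A1_f, of "Q \<omega> - \<eta> *\<^sub>R update \<omega>" "Q \<omega>"]]
    by (simp add: a_def)
  also have "\<dots> = f (Q \<omega>) + (a \<bullet> (- \<eta> *\<^sub>R (real K *\<^sub>R a + d + n)) + L / 2 * (norm (\<eta> *\<^sub>R (real K *\<^sub>R a + d + n)))\<^sup>2)"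
    by (simp add: a_def d_def n_def update_decomposition)
  also have "\<dots> \<le> f (Q \<omega>) + (- \<eta> * real K / 2 * (norm a)\<^sup>2 + \<eta> / (2 * real K) * (norm d)\<^sup>2
      + (L * real K * \<eta>\<^sup>2 - \<eta>) * (a \<bullet> n) + L * \<eta>\<^sup>2 * (d \<bullet> n) + L * \<eta>\<^sup>2 / 2 * (norm n)\<^sup>2)"
    using descent_step_inequality[OF eta_pos K_pos L_eta_K_le_1] by simp
  also have "\<dots> \<le> f (Q \<omega>) - \<eta> * real K / 2 * (norm a)\<^sup>2 + \<eta> / real K * (norm d)\<^sup>2
      + (L * real K * \<eta>\<^sup>2 - \<eta>) * (a \<bullet> n) + L * \<eta>\<^sup>2 * noise_coeff * (norm n)\<^sup>2"
  proof (cases "N * K = 1")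
    case True
    have "d = 0"
      using drift_error_single_call[OF True] by (simp add: d_def)
    moreover have "noise_coeff = 1/2"
      unfolding noise_coeff_def by (rule if_P[OF True])
    ultimately show ?thesis
      by (simp only:) simp
  next
    case False
    have "noise_coeff = 1"
      unfolding noise_coeff_def by (rule if_not_P[OF False])
    then show ?thesis
      using cross_term_le[OF L_nonneg L_eta_power2_le, of d n] by simp
  qed
  finally show ?thesis
    by (simp add: a_def d_def n_def)
qed

lemma integrable_f_update: "integrable M (\<lambda>\<omega>. f (Q \<omega> - \<eta> *\<^sub>R update \<omega>))"
proof -
  define U where "U \<omega> = - \<eta> *\<^sub>R update \<omega>" for \<omega>
  have U: "square_integrable M U"
    unfolding U_def[abs_def] by (intro square_integrable_scaleR square_integrable_update)
  then have U_meas: "U \<in> borel_measurable M"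
    by (simp add: square_integrable_def)
  define r where "r \<omega> = f (Q \<omega> + U \<omega>) - f (Q \<omega>) - gf (Q \<omega>) \<bullet> U \<omega>" for \<omega>
  have "integrable M r"
  proof (rule Bochner_Integration.integrable_bound)
    show "integrable M (\<lambda>\<omega>. L / 2 * (norm (U \<omega>))\<^sup>2)"
      using square_integrable_integrable_power2[OF U] by (rule integrable_mult_right)
    show "r \<in> borel_measurable M"
      unfolding r_def[abs_def]
      using measurable_compose[OF borel_measurable_add[OF Q_meas U_meas] borel_measurable_f]
        measurable_compose[OF Q_meas borel_measurable_f] measurable_grad_model U_meas
      by (intro borel_measurable_diff borel_measurable_inner) auto
    show "AE \<omega> in M. norm (r \<omega>) \<le> norm (L / 2 * (norm (U \<omega>))\<^sup>2)"
    proof (rule AE_I2)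
      fix \<omega>
      show "norm (r \<omega>) \<le> norm (L / 2 * (norm (U \<omega>))\<^sup>2)"
        using lipschitz_gradient_taylor_bound[OF f_grad A1_f, of "Q \<omega> + U \<omega>" "Q \<omega>"] L_nonneg
        by (simp add: r_def)
    qed
  qed
  then have "integrable M (\<lambda>\<omega>. r \<omega> + f (Q \<omega>) + gf (Q \<omega>) \<bullet> U \<omega>)"
    by (intro Bochner_Integration.integrable_add fQ_int integrable_inner_square_integrable
        square_integrable_grad_model U)
  then show ?thesis
    by (simp add: r_def U_def)
qed

lemma integral_f_update_le:
  "(\<integral>\<omega>. f (Q \<omega> - \<eta> *\<^sub>R update \<omega>) \<partial>M) \<le> (\<integral>\<omega>. f (Q \<omega>) \<partial>M) - \<eta> * real K / 2 * grad_moment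
     + \<eta> / real K * (\<integral>\<omega>. (norm (drift_error \<omega>))\<^sup>2 \<partial>M)
     + L * \<eta>\<^sup>2 * noise_coeff * (\<integral>\<omega>. (norm (noise_sum \<omega>))\<^sup>2 \<partial>M)"
proof -
  have int_d: "integrable M (\<lambda>\<omega>. (norm (drift_error \<omega>))\<^sup>2)"
    by (rule square_integrable_integrable_power2[OF square_integrable_drift_error])
  have int_n: "integrable M (\<lambda>\<omega>. (norm (noise_sum \<omega>))\<^sup>2)"
    by (rule square_integrable_integrable_power2[OF square_integrable_noise_sum])
  have int_an: "integrable M (\<lambda>\<omega>. gf (Q \<omega>) \<bullet> noise_sum \<omega>)"
    by (rule integrable_inner_square_integrable[OF square_integrable_grad_model square_integrable_noise_sum])
  have "(\<integral>\<omega>. f (Q \<omega> - \<eta> *\<^sub>R update \<omega>) \<partial>M)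
      \<le> (\<integral>\<omega>. f (Q \<omega>) - \<eta> * real K / 2 * (norm (gf (Q \<omega>)))\<^sup>2 + \<eta> / real K * (norm (drift_error \<omega>))\<^sup>2
          + (L * real K * \<eta>\<^sup>2 - \<eta>) * (gf (Q \<omega>) \<bullet> noise_sum \<omega>)
          + L * \<eta>\<^sup>2 * noise_coeff * (norm (noise_sum \<omega>))\<^sup>2 \<partial>M)"
    by (intro integral_mono integrable_f_update f_update_le Bochner_Integration.integrable_add
        Bochner_Integration.integrable_diff integrable_mult_right fQ_int gQ_int int_d int_n int_an)
  also have "\<dots> = (\<integral>\<omega>. f (Q \<omega>) \<partial>M) - \<eta> * real K / 2 * grad_moment
      + \<eta> / real K * (\<integral>\<omega>. (norm (drift_error \<omega>))\<^sup>2 \<partial>M)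
      + (L * real K * \<eta>\<^sup>2 - \<eta>) * (\<integral>\<omega>. gf (Q \<omega>) \<bullet> noise_sum \<omega> \<partial>M)
      + L * \<eta>\<^sup>2 * noise_coeff * (\<integral>\<omega>. (norm (noise_sum \<omega>))\<^sup>2 \<partial>M)"
    using fQ_int gQ_int int_d int_n int_an
    by (simp add: grad_moment_def Bochner_Integration.integral_add Bochner_Integration.integral_diff
        Bochner_Integration.integrable_add Bochner_Integration.integrable_diff)
  finally show ?thesis
    by (simp add: integral_inner_grad_noise_sum_eq_0)
qed

theorem expected_descent:
  "(\<integral>\<omega>. f (Q \<omega> - \<eta> *\<^sub>R update \<omega>) \<partial>M)
     \<le> (\<integral>\<omega>. f (Q \<omega>) \<partial>M)
        - (1/2 - 9 * L\<^sup>2 * \<eta>\<^sup>2 * (real K)\<^sup>2 * real N * p2sum) * \<eta> * real K * grad_moment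
        + 3/2 * L\<^sup>2 * \<eta>^3 * (real K)\<^sup>2 * real N * (\<sigma>l\<^sup>2 + 6 * real K * \<sigma>g\<^sup>2) * p2sum
        + L * \<eta>\<^sup>2 * (real K)\<^sup>2 * real N / 2 * \<sigma>l\<^sup>2 * p2sum"
proof -
  have "\<eta> / real K * (\<integral>\<omega>. (norm (drift_error \<omega>))\<^sup>2 \<partial>M)
      \<le> \<eta> / real K * (real K * p2sum * L\<^sup>2 * real N *
          (3/2 * \<eta>\<^sup>2 * (real K)\<^sup>2 * \<sigma>l\<^sup>2 + 3 * \<eta>\<^sup>2 * (real K)^3 * (3 * \<sigma>g\<^sup>2 + 3 * grad_moment)))"
    using integral_drift_error_le eta_pos by (intro mult_left_mono) auto
  also have "\<dots> = 3/2 * L\<^sup>2 * \<eta>^3 * (real K)\<^sup>2 * real N * (\<sigma>l\<^sup>2 + 6 * real K * \<sigma>g\<^sup>2) * p2sum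
      + 9 * L\<^sup>2 * \<eta>\<^sup>2 * (real K)\<^sup>2 * real N * p2sum * \<eta> * real K * grad_moment"
    using K by (simp add: field_simps power2_eq_square power3_eq_cube)
  finally have drift: "\<eta> / real K * (\<integral>\<omega>. (norm (drift_error \<omega>))\<^sup>2 \<partial>M)
      \<le> 3/2 * L\<^sup>2 * \<eta>^3 * (real K)\<^sup>2 * real N * (\<sigma>l\<^sup>2 + 6 * real K * \<sigma>g\<^sup>2) * p2sum
         + 9 * L\<^sup>2 * \<eta>\<^sup>2 * (real K)\<^sup>2 * real N * p2sum * \<eta> * real K * grad_moment" .
  have "L * \<eta>\<^sup>2 * noise_coeff * (\<integral>\<omega>. (norm (noise_sum \<omega>))\<^sup>2 \<partial>M)
      \<le> L * \<eta>\<^sup>2 * noise_coeff * (real K * p2sum * \<sigma>l\<^sup>2)"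
    using integral_noise_sum_le L_nonneg by (intro mult_left_mono) (auto simp: noise_coeff_def)
  also have "\<dots> = (L * \<eta>\<^sup>2 * p2sum * \<sigma>l\<^sup>2) * (noise_coeff * real K)"
    by (simp add: algebra_simps)
  also have "\<dots> \<le> (L * \<eta>\<^sup>2 * p2sum * \<sigma>l\<^sup>2) * ((real K)\<^sup>2 * real N / 2)"
    using noise_coeff_mul_K_le L_nonneg p2sum_nonneg by (intro mult_left_mono) auto
  finally have noise: "L * \<eta>\<^sup>2 * noise_coeff * (\<integral>\<omega>. (norm (noise_sum \<omega>))\<^sup>2 \<partial>M)
      \<le> L * \<eta>\<^sup>2 * (real K)\<^sup>2 * real N / 2 * \<sigma>l\<^sup>2 * p2sum"
    by (simp add: algebra_simps)
  have "(\<integral>\<omega>. f (Q \<omega>) \<partial>M)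
        - (1/2 - 9 * L\<^sup>2 * \<eta>\<^sup>2 * (real K)\<^sup>2 * real N * p2sum) * \<eta> * real K * grad_moment
        + 3/2 * L\<^sup>2 * \<eta>^3 * (real K)\<^sup>2 * real N * (\<sigma>l\<^sup>2 + 6 * real K * \<sigma>g\<^sup>2) * p2sum
        + L * \<eta>\<^sup>2 * (real K)\<^sup>2 * real N / 2 * \<sigma>l\<^sup>2 * p2sum
      = (\<integral>\<omega>. f (Q \<omega>) \<partial>M) - \<eta> * real K / 2 * grad_moment
        + (3/2 * L\<^sup>2 * \<eta>^3 * (real K)\<^sup>2 * real N * (\<sigma>l\<^sup>2 + 6 * real K * \<sigma>g\<^sup>2) * p2sum
           + 9 * L\<^sup>2 * \<eta>\<^sup>2 * (real K)\<^sup>2 * real N * p2sum * \<eta> * real K * grad_moment)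
        + L * \<eta>\<^sup>2 * (real K)\<^sup>2 * real N / 2 * \<sigma>l\<^sup>2 * p2sum"
    by (simp add: algebra_simps)
  then show ?thesis
    using integral_f_update_le drift noise by linarith
qed


corollary expected_descent_le:
  assumes "C \<le> 1/2 - 9 * L\<^sup>2 * \<eta>\<^sup>2 * (real K)\<^sup>2 * real N * p2sum"
  shows "(\<integral>\<omega>. f (Q \<omega> - \<eta> *\<^sub>R update \<omega>) \<partial>M)
     \<le> (\<integral>\<omega>. f (Q \<omega>) \<partial>M) - C * \<eta> * real K * grad_moment
        + 3/2 * L\<^sup>2 * \<eta>^3 * (real K)\<^sup>2 * real N * (\<sigma>l\<^sup>2 + 6 * real K * \<sigma>g\<^sup>2) * p2sum
        + L * \<eta>\<^sup>2 * (real K)\<^sup>2 * real N / 2 * \<sigma>l\<^sup>2 * p2sum"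
proof -
  have "C * \<eta> * real K * grad_moment
      \<le> (1/2 - 9 * L\<^sup>2 * \<eta>\<^sup>2 * (real K)\<^sup>2 * real N * p2sum) * \<eta> * real K * grad_moment"
    using assms eta_pos grad_moment_nonneg by (intro mult_right_mono) auto
  then show ?thesis
    using expected_descent by linarith
qed
end

theorem lemma4:
  fixes M :: "'w measure" and S :: "'n measure" and dummy_d :: "'d::finite itself" and dummy_k :: "'k::finite itself"
    and N K :: nat and L \<eta> C \<sigma>l \<sigma>g :: real
    and p :: "nat \<Rightarrow> real"
    and f :: "('d, 'k) mat \<Rightarrow> real" and gf :: "('d, 'k) mat \<Rightarrow> ('d, 'k) mat"
    and fi :: "nat \<Rightarrow> ('d, 'k) mat \<Rightarrow> real" and gfi :: "nat \<Rightarrow> ('d, 'k) mat \<Rightarrow> ('d, 'k) mat"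
    and G :: "nat \<Rightarrow> ('d, 'k) mat \<Rightarrow> 'n \<Rightarrow> ('d, 'k) mat"
    and Q :: "'w \<Rightarrow> ('d, 'k) mat"
    and \<xi> :: "nat \<Rightarrow> nat \<Rightarrow> 'w \<Rightarrow> 'n"
  assumes prob: "prob_space M"
    and N: "N \<ge> 1" and K: "K \<ge> 1"
    and p_nonneg: "\<And>i. i \<in> {1..N} \<Longrightarrow> p i \<ge> 0"
    and p_sum: "(\<Sum>i\<in>{1..N}. p i) = 1"
    and f_def: "\<And>W. f W = (\<Sum>i\<in>{1..N}. p i * fi i W)"
    \<comment> \<open>differentiability, with gradients gf and gfi\<close>
    and f_grad: "\<And>W. (f has_derivative (\<lambda>H. gf W \<bullet> H)) (at W)"
    and fi_grad: "\<And>i W. i \<in> {1..N} \<Longrightarrow> (fi i has_derivative (\<lambda>H. gfi i W \<bullet> H)) (at W)"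
    \<comment> \<open>(A1)\<close>
    and A1_f: "\<And>W W'. norm (gf W - gf W') \<le> L * norm (W - W')"
    and A1_fi: "\<And>i W W'. i \<in> {1..N} \<Longrightarrow> norm (gfi i W - gfi i W') \<le> L * norm (W - W')"
    and A1_sample: "\<And>i x W W'. i \<in> {1..N} \<Longrightarrow> x \<in> space S \<Longrightarrow>
                      norm (G i W x - G i W' x) \<le> L * norm (W - W')"
    \<comment> \<open>measurability of the model and the oracle\<close>
    and Q_meas: "Q \<in> borel_measurable M"
    and xi_meas: "\<And>i \<tau>. \<xi> i \<tau> \<in> measurable M S"
    and G_meas: "\<And>i. i \<in> {1..N} \<Longrightarrow> (\<lambda>(W, x). G i W x) \<in> borel_measurable (borel \<Otimes>\<^sub>M S)"
    \<comment> \<open>fresh randomness per call: the noises are mutually independent and independent of Q_t\<close>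
    and xi_indep: "prob_space.indep_vars M (\<lambda>_. S) (\<lambda>(i, \<tau>). \<xi> i \<tau>) ({1..N} \<times> {..<K})"
    and Q_indep: "prob_space.indep_set M (sets (vimage_algebra (space M) Q borel))
                    (sets (vimage_algebra (space M)
                       (\<lambda>\<omega>. restrict (\<lambda>(i, \<tau>). \<xi> i \<tau> \<omega>) ({1..N} \<times> {..<K}))
                       (\<Pi>\<^sub>M j\<in>{1..N} \<times> {..<K}. S)))"
    \<comment> \<open>(A2): unbiasedness and bounded variance of every call\<close>
    and A2_int: "\<And>i \<tau> W. i \<in> {1..N} \<Longrightarrow> \<tau> < K \<Longrightarrow> integrable M (\<lambda>\<omega>. G i W (\<xi> i \<tau> \<omega>))"
    and A2_unbiased: "\<And>i \<tau> W. i \<in> {1..N} \<Longrightarrow> \<tau> < K \<Longrightarrow>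
                        (\<integral>\<omega>. G i W (\<xi> i \<tau> \<omega>) \<partial>M) = gfi i W"
    and A2_var_int: "\<And>i \<tau> W. i \<in> {1..N} \<Longrightarrow> \<tau> < K \<Longrightarrow>
                        integrable M (\<lambda>\<omega>. (norm (G i W (\<xi> i \<tau> \<omega>) - gfi i W))\<^sup>2)"
    and A2_var: "\<And>i \<tau> W. i \<in> {1..N} \<Longrightarrow> \<tau> < K \<Longrightarrow>
                        (\<integral>\<omega>. (norm (G i W (\<xi> i \<tau> \<omega>) - gfi i W))\<^sup>2 \<partial>M) \<le> \<sigma>l\<^sup>2"
    \<comment> \<open>(A3)\<close>
    and A3: "\<And>i W. i \<in> {1..N} \<Longrightarrow> (norm (gf W - gfi i W))\<^sup>2 \<le> \<sigma>g\<^sup>2"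
    and sg_pos: "\<sigma>g\<^sup>2 > 0"
    \<comment> \<open>the expectations on the right-hand side exist\<close>
    and fQ_int: "integrable M (\<lambda>\<omega>. f (Q \<omega>))"
    and gQ_int: "integrable M (\<lambda>\<omega>. (norm (gf (Q \<omega>)))\<^sup>2)"
    \<comment> \<open>step size and the two conditions of the lemma\<close>
    and eta_pos: "\<eta> > 0"
    and C_pos: "C > 0"
    and cond1: "1/2 - 9 * L\<^sup>2 * \<eta>\<^sup>2 * (real K)\<^sup>2 * real N * (\<Sum>i\<in>{1..N}. (p i)\<^sup>2) \<ge> C"
    and cond2: "L * \<eta>\<^sup>2 * real K / 2 - \<eta> / 2 \<le> 0"
  shows "(\<integral>\<omega>. f (V_next G p N K \<eta> (\<lambda>i \<tau>. \<xi> i \<tau> \<omega>) (Q \<omega>)) \<partial>M)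
         \<le> (\<integral>\<omega>. f (Q \<omega>) \<partial>M)
            - C * \<eta> * real K * (\<integral>\<omega>. (norm (gf (Q \<omega>)))\<^sup>2 \<partial>M)
            + 3/2 * L\<^sup>2 * \<eta>^3 * (real K)\<^sup>2 * real N * (\<sigma>l\<^sup>2 + 6 * real K * \<sigma>g\<^sup>2) * (\<Sum>i\<in>{1..N}. (p i)\<^sup>2)
            + L * \<eta>\<^sup>2 * (real K)\<^sup>2 * real N / 2 * \<sigma>l\<^sup>2 * (\<Sum>i\<in>{1..N}. (p i)\<^sup>2)"
proof -
  interpret local_sgd_round M S N K \<eta> \<sigma>l L G gfi Q \<xi> \<sigma>g p f gf fi
  proof (intro local_sgd_round.intro local_sgd_oracle.intro local_sgd_oracle_axioms.intro
      local_sgd_round_axioms.intro)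
    show "9 * L\<^sup>2 * \<eta>\<^sup>2 * (real K)\<^sup>2 * real N * (\<Sum>i\<in>{1..N}. (p i)\<^sup>2) \<le> 1/2"
      using cond1 C_pos by linarith
  qed fact+
  have "(\<integral>\<omega>. f (V_next G p N K \<eta> (\<lambda>i \<tau>. \<xi> i \<tau> \<omega>) (Q \<omega>)) \<partial>M) = (\<integral>\<omega>. f (Q \<omega> - \<eta> *\<^sub>R update \<omega>) \<partial>M)"
    by (simp add: V_next_eq)
  also have "\<dots> \<le> (\<integral>\<omega>. f (Q \<omega>) \<partial>M) - C * \<eta> * real K * grad_moment
        + 3/2 * L\<^sup>2 * \<eta>^3 * (real K)\<^sup>2 * real N * (\<sigma>l\<^sup>2 + 6 * real K * \<sigma>g\<^sup>2) * p2sum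
        + L * \<eta>\<^sup>2 * (real K)\<^sup>2 * real N / 2 * \<sigma>l\<^sup>2 * p2sum"
    using cond1 by (intro expected_descent_le) (simp add: p2sum_def)
  finally show ?thesis
    by (simp only: grad_moment_def p2sum_def)
qed

end
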